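(* Let $c>0$, $0<\alpha\le1$, and $w(x)=\exp(c|x|^\alpha)$ for $x\in\mathbb{R}^n$. If $Y(\mathbb{R}^n)$ is a translation-invariant Banach function space, then there exist non-trivial (i.e. non-constant) Fourier multipliers in $\mathcal{M}_{Y(\mathbb{R}^n,w)}$.
   Context: Banach function spaces: let $\mathfrak{M}^+(\mathbb{R}^n)$ be the set of measurable functions with values in $[0,\infty]$. A Banach function norm $\rho:\mathfrak{M}^+\to[0,\infty]$ satisfies, for all $f,g,f_j\in\mathfrak{M}^+$, $a\ge0$, measurable $E$: (A1) $\rho(f)=0\iff f=0$ a.e., $\rho(af)=a\rho(f)$, $\rho(f+g)\le\rho(f)+\rho(g)$; (A2) $0\le g\le f$ a.e. implies $\rho(g)\le\rho(f)$; (A3) $0\le f_j\uparrow f$ a.e. implies $\rho(f_j)\uparrow\rho(f)$; (A4) $|E|<\infty$ implies $\rho(\chi_E)<\infty$; (A5) $|E|<\infty$ implies $\int_Ef\le C_E\rho(f)$ with $C_E$ independent of $f$. $Y(\mathbb{R}^n)$ is the set of measurable complex $f$ with $\rho(|f|)<\infty$, $\|f\|_Y=\rho(|f|)$; translation-invariant means $\|u(\cdot-y)\|_Y=\|u\|_Y$ for all $y$, $u\in Y$. $Y(\mathbb{R}^n,w)=\{f: fw\in Y\}$ with norm $\|fw\|_Y$. Fourier transform: $(Fu)(\xi)=\int u(x)e^{-ix\xi}dx$, extended to $S'(\mathbb{R}^n)$. $\mathcal{M}_{Z}$ is the set of $a\in S'(\mathbb{R}^n)$ with $\sup\{\|F^{-1}aFu\|_{Z}/\|u\|_{Z}: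 u\in (S(\mathbb{R}^n)\cap Z)\setminus\{0\}\}<\infty$. *)

theory Defs
  imports "HOL-Analysis.Analysis"
begin

text \<open>A Banach function norm acts on M^+, the Lebesgue measurable functions with
values in [0,\<infinity>]; the axioms are only imposed on such functions.\<close>

definition banach_function_norm :: "((real^'n::finite \<Rightarrow> ennreal) \<Rightarrow> ennreal) \<Rightarrow> bool" where
  "banach_function_norm \<rho> \<longleftrightarrow>
     \<comment> \<open>(A1)\<close>
     (\<forall>f \<in> borel_measurable lebesgue. \<rho> f = 0 \<longleftrightarrow> (AE x in lebesgue. f x = 0)) \<and>
     (\<forall>f \<in> borel_measurable lebesgue. \<forall>a::real. a \<ge> 0 \<longrightarrow>
        \<rho> (\<lambda>x. ennreal a * f x) = ennreal a * \<rho> f) \<and>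
     (\<forall>f \<in> borel_measurable lebesgue. \<forall>g \<in> borel_measurable lebesgue.
        \<rho> (\<lambda>x. f x + g x) \<le> \<rho> f + \<rho> g) \<and>
     \<comment> \<open>(A2)\<close>
     (\<forall>f \<in> borel_measurable lebesgue. \<forall>g \<in> borel_measurable lebesgue.
        (AE x in lebesgue. g x \<le> f x) \<longrightarrow> \<rho> g \<le> \<rho> f) \<and>
     \<comment> \<open>(A3)\<close>
     (\<forall>F f. (\<forall>j. F j \<in> borel_measurable lebesgue) \<longrightarrow> f \<in> borel_measurable lebesgue \<longrightarrow>
        (AE x in lebesgue. incseq (\<lambda>j. F j x) \<and> (\<lambda>j. F j x) \<longlonglongrightarrow> f x) \<longrightarrow>
        (\<lambda>j. \<rho> (F j)) \<longlonglongrightarrow> \<rho> f) \<and>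
     \<comment> \<open>(A4)\<close>
     (\<forall>E \<in> sets lebesgue. emeasure lebesgue E < \<infinity> \<longrightarrow> \<rho> (indicator E) < \<infinity>) \<and>
     \<comment> \<open>(A5)\<close>
     (\<forall>E \<in> sets lebesgue. emeasure lebesgue E < \<infinity> \<longrightarrow>
        (\<exists>C::real. \<forall>f \<in> borel_measurable lebesgue.
            set_nn_integral lebesgue E f \<le> ennreal C * \<rho> f))"

definition Ynorm :: "((real^'n \<Rightarrow> ennreal) \<Rightarrow> ennreal) \<Rightarrow> (real^'n \<Rightarrow> complex) \<Rightarrow> ennreal" where
  "Ynorm \<rho> f = \<rho> (\<lambda>x. ennreal (cmod (f x)))"

definition in_Y :: "((real^'n \<Rightarrow> ennreal) \<Rightarrow> ennreal) \<Rightarrow> (real^'n \<Rightarrow> complex) \<Rightarrow> bool" where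
  "in_Y \<rho> f \<longleftrightarrow> f \<in> borel_measurable lebesgue \<and> Ynorm \<rho> f < \<infinity>"

definition translation_invariant :: "((real^'n \<Rightarrow> ennreal) \<Rightarrow> ennreal) \<Rightarrow> bool" where
  "translation_invariant \<rho> \<longleftrightarrow>
     (\<forall>u y. in_Y \<rho> u \<longrightarrow> Ynorm \<rho> (\<lambda>x. u (x - y)) = Ynorm \<rho> u)"

definition in_Yw :: "((real^'n \<Rightarrow> ennreal) \<Rightarrow> ennreal) \<Rightarrow> (real^'n \<Rightarrow> real) \<Rightarrow> (real^'n \<Rightarrow> complex) \<Rightarrow> bool" where
  "in_Yw \<rho> w f \<longleftrightarrow> in_Y \<rho> (\<lambda>x. f x * complex_of_real (w x))"

definition Ywnorm :: "((real^'n \<Rightarrow> ennreal) \<Rightarrow> ennreal) \<Rightarrow> (real^'n \<Rightarrow> real) \<Rightarrow> (real^'n \<Rightarrow> complex) \<Rightarrow> ennreal" where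
  "Ywnorm \<rho> w f = Ynorm \<rho> (\<lambda>x. f x * complex_of_real (w x))"

definition partial :: "'n::finite \<Rightarrow> (real^'n \<Rightarrow> complex) \<Rightarrow> real^'n \<Rightarrow> complex" where
  "partial i f x = vector_derivative (\<lambda>t. f (x + t *\<^sub>R axis i 1)) (at 0)"

fun dlist :: "'n::finite list \<Rightarrow> (real^'n \<Rightarrow> complex) \<Rightarrow> real^'n \<Rightarrow> complex" where
  "dlist [] f = f"
| "dlist (i # is) f = partial i (dlist is f)"

definition schwartz :: "(real^'n::finite \<Rightarrow> complex) \<Rightarrow> bool" where
  "schwartz f \<longleftrightarrow>
     (\<forall>is i x. (\<lambda>t. dlist is f (x + t *\<^sub>R axis i 1)) differentiable (at 0)) \<and>
     (\<forall>is (N::nat). \<exists>B. \<forall>x. (1 + norm x) ^ N * cmod (dlist is f x) \<le> B)"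

definition schwartz_seminorm :: "nat \<Rightarrow> (real^'n::finite \<Rightarrow> complex) \<Rightarrow> real" where
  "schwartz_seminorm N f =
     Sup {(1 + norm x) ^ N * cmod (dlist is f x) | x is. length is \<le> N}"

text \<open>Tempered distributions: continuous linear functionals on the Schwartz space
(values outside the Schwartz space are irrelevant).\<close>

definition tempered :: "((real^'n::finite \<Rightarrow> complex) \<Rightarrow> complex) \<Rightarrow> bool" where
  "tempered T \<longleftrightarrow>
     (\<forall>f g. schwartz f \<longrightarrow> schwartz g \<longrightarrow> T (\<lambda>x. f x + g x) = T f + T g) \<and>
     (\<forall>f c. schwartz f \<longrightarrow> T (\<lambda>x. c * f x) = c * T f) \<and>
     (\<exists>C N. \<forall>f. schwartz f \<longrightarrow> cmod (T f) \<le> C * schwartz_seminorm N f)"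

definition fourier :: "(real^'n::finite \<Rightarrow> complex) \<Rightarrow> real^'n \<Rightarrow> complex" where
  "fourier u \<xi> = (LINT x|lebesgue. u x * cis (- (x \<bullet> \<xi>)))"

definition inv_fourier :: "(real^'n::finite \<Rightarrow> complex) \<Rightarrow> real^'n \<Rightarrow> complex" where
  "inv_fourier v x = complex_of_real ((2 * pi) powr (- real CARD('n))) *
                     (LINT \<xi>|lebesgue. v \<xi> * cis (x \<bullet> \<xi>))"

text \<open>The distribution F^{-1} a F u for a \<in> S' and u \<in> S:
 <F^{-1}(a (F u)), \<phi>> = <a (F u), F^{-1} \<phi>> = <a, (F u) (F^{-1} \<phi>)>.\<close>

definition multiplier_op ::
  "((real^'n::finite \<Rightarrow> complex) \<Rightarrow> complex) \<Rightarrow> (real^'n \<Rightarrow> complex) \<Rightarrow> (real^'n \<Rightarrow> complex) \<Rightarrow> complex" where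
  "multiplier_op a u = (\<lambda>\<phi>. a (\<lambda>\<xi>. fourier u \<xi> * inv_fourier \<phi> \<xi>))"

definition represents :: "((real^'n::finite \<Rightarrow> complex) \<Rightarrow> complex) \<Rightarrow> (real^'n \<Rightarrow> complex) \<Rightarrow> bool" where
  "represents T g \<longleftrightarrow>
     g \<in> borel_measurable lebesgue \<and>
     (\<forall>\<phi>. schwartz \<phi> \<longrightarrow> integrable lebesgue (\<lambda>x. g x * \<phi> x) \<and>
                         T \<phi> = (LINT x|lebesgue. g x * \<phi> x))"

text \<open>Fourier multipliers on Z = Y(R^n,w): a \<in> S' with
 sup {\<parallel>F^{-1} a F u\<parallel>_Z / \<parallel>u\<parallel>_Z : u \<in> (S \<inter> Z) \ {0}} < \<infinity>.\<close>

definition fourier_multiplier_Yw ::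
  "((real^'n::finite \<Rightarrow> ennreal) \<Rightarrow> ennreal) \<Rightarrow> (real^'n \<Rightarrow> real) \<Rightarrow> ((real^'n \<Rightarrow> complex) \<Rightarrow> complex) \<Rightarrow> bool" where
  "fourier_multiplier_Yw \<rho> w a \<longleftrightarrow> tempered a \<and>
     (\<exists>C::real. \<forall>u. schwartz u \<and> in_Yw \<rho> w u \<and> (\<exists>x. u x \<noteq> 0) \<longrightarrow>
        (\<exists>g. in_Yw \<rho> w g \<and> represents (multiplier_op a u) g \<and>
             Ywnorm \<rho> w g \<le> ennreal C * Ywnorm \<rho> w u))"

definition constant_distribution :: "((real^'n::finite \<Rightarrow> complex) \<Rightarrow> complex) \<Rightarrow> bool" where
  "constant_distribution a \<longleftrightarrow>
     (\<exists>k. \<forall>\<phi>. schwartz \<phi> \<longrightarrow> a \<phi> = k * (LINT x|lebesgue. \<phi> x))"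

end

theory Submission
  imports Defs "HOL-Probability.Probability"
begin

text \<open>Take for the multiplier the symbol \<open>\<xi> \<mapsto> exp (- i h \<cdot> \<xi>)\<close> of the translation by a fixed
\<open>h \<noteq> 0\<close>. Fourier inversion for Schwartz functions, proved by Gaussian regularisation, shows
that \<open>F\<^sup>-\<^sup>1 a F u\<close> is the function \<open>u (x - h)\<close>. Since \<open>t \<mapsto> t powr \<alpha>\<close> is subadditive for
\<open>\<alpha> \<le> 1\<close>, the weight satisfies \<open>w x \<le> w h * w (x - h)\<close>, so translation invariance of \<open>Y\<close>
gives \<open>\<parallel>u (\<cdot> - h) w\<parallel>\<^sub>Y \<le> w h * \<parallel>u w\<parallel>\<^sub>Y\<close>. Pairing the symbol with Gaussians of two
different widths shows that it is not a constant.\<close>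

lemma lborel_integral_vec_affine:
  fixes f :: "real^'n::finite \<Rightarrow> 'a::{banach, second_countable_topology}" and c :: real
  assumes c: "c \<noteq> 0" and [measurable]: "f \<in> borel_measurable borel"
  shows "integral\<^sup>L lborel f = (\<bar>c\<bar>^CARD('n)) *\<^sub>R (\<integral>x. f (t + c *\<^sub>R x) \<partial>lborel)"
proof -
  have [measurable]: "(\<lambda>x. t + c *\<^sub>R x) \<in> borel_measurable (borel :: (real^'n) measure)"
    by measurable
  have "integral\<^sup>L lborel f =
      integral\<^sup>L (density (distr lborel borel (\<lambda>x. t + c *\<^sub>R x)) (\<lambda>_. \<bar>c\<bar>^CARD('n))) f"
    using lborel_affine[OF c, of t] by simp
  also have "\<dots> = (\<integral>x. (\<bar>c\<bar>^CARD('n)) *\<^sub>R f (t + c *\<^sub>R x) \<partial>lborel)"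
    by (subst integral_density) (auto simp: integral_distr)
  finally show ?thesis by simp
qed

lemma lborel_integrable_vec_affine_iff:
  fixes f :: "real^'n::finite \<Rightarrow> 'a::{banach, second_countable_topology}" and c :: real
  assumes c: "c \<noteq> 0" and [measurable]: "f \<in> borel_measurable borel"
  shows "integrable lborel (\<lambda>x. f (t + c *\<^sub>R x)) \<longleftrightarrow> integrable lborel f"
proof -
  have [measurable]: "(\<lambda>x. t + c *\<^sub>R x) \<in> borel_measurable (borel :: (real^'n) measure)"
    by measurable
  have "integrable lborel f \<longleftrightarrow>
      integrable (density (distr lborel borel (\<lambda>x. t + c *\<^sub>R x)) (\<lambda>_. \<bar>c\<bar>^CARD('n))) f"
    using lborel_affine[OF c, of t] by simp
  also have "\<dots> \<longleftrightarrow> integrable lborel (\<lambda>x. (\<bar>c\<bar>^CARD('n)) *\<^sub>R f (t + c *\<^sub>R x))"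
    by (subst integrable_density) (auto simp: integrable_distr_eq)
  also have "\<dots> \<longleftrightarrow> integrable lborel (\<lambda>x. f (t + c *\<^sub>R x))"
    using c integrable_scaleR_right[of "1 / \<bar>c\<bar>^CARD('n)" lborel
        "\<lambda>x. \<bar>c\<bar>^CARD('n) *\<^sub>R f (t + c *\<^sub>R x)"]
      integrable_scaleR_right[of "\<bar>c\<bar>^CARD('n)" lborel "\<lambda>x. f (t + c *\<^sub>R x)"] by auto
  finally show ?thesis ..
qed

lemma integrable_translate:
  fixes f :: "real^'n::finite \<Rightarrow> 'a::{banach, second_countable_topology}"
  assumes "f \<in> borel_measurable borel" and "integrable lborel f"
  shows "integrable lborel (\<lambda>x. f (x + t))"
  using lborel_integrable_vec_affine_iff[of 1 f t] assms by (simp add: add.commute)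

lemma
  fixes f :: "real^'n::finite \<Rightarrow> real \<Rightarrow> 'a::{real_normed_field, banach, second_countable_topology}"
  assumes int: "\<And>b. b \<in> Basis \<Longrightarrow> integrable lborel (f b)"
  shows lborel_integrable_prod_coords: "integrable lborel (\<lambda>x. \<Prod>b\<in>Basis. f b (x \<bullet> b))"
    and lborel_integral_prod_coords:
      "(\<integral>x. (\<Prod>b\<in>Basis. f b (x \<bullet> b)) \<partial>lborel) = (\<Prod>b\<in>Basis. integral\<^sup>L lborel (f b))"
proof -
  interpret product_sigma_finite "\<lambda>_::real^'n. lborel :: real measure" by standard
  let ?T = "\<lambda>g. \<Sum>b\<in>Basis. g b *\<^sub>R (b::real^'n)"
  have T: "?T \<in> measurable (\<Pi>\<^sub>M b\<in>Basis. lborel) borel" by measurable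
  have [measurable]: "\<And>b. b \<in> Basis \<Longrightarrow> f b \<in> borel_measurable borel"
    using int by (auto dest: borel_measurable_integrable)
  have coords: "(\<Prod>b\<in>Basis. f b (?T g \<bullet> b)) = (\<Prod>b\<in>Basis. f b (g b))" for g
    by (intro prod.cong refl) (simp add: inner_sum_left inner_Basis if_distrib cong: if_cong)
  have [measurable]: "(\<lambda>x. \<Prod>b\<in>Basis. f b (x \<bullet> b)) \<in> borel_measurable (borel :: (real^'n) measure)"
    by measurable
  have "integrable (\<Pi>\<^sub>M b\<in>Basis. lborel) (\<lambda>g. \<Prod>b\<in>Basis. f b (g b))"
    by (rule product_integrable_prod) (auto intro: int)
  then show "integrable lborel (\<lambda>x. \<Prod>b\<in>Basis. f b (x \<bullet> b))"
    by (subst lborel_eq) (simp add: integrable_distr_eq[OF T] coords)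
  have "(\<integral>x. (\<Prod>b\<in>Basis. f b (x \<bullet> b)) \<partial>lborel) =
      (\<integral>g. (\<Prod>b\<in>Basis. f b (g b)) \<partial>(\<Pi>\<^sub>M b\<in>Basis. lborel))"
    by (subst lborel_eq) (simp add: integral_distr[OF T] coords)
  also have "\<dots> = (\<Prod>b\<in>Basis. integral\<^sup>L lborel (f b))"
    by (rule product_integral_prod) (auto intro: int)
  finally show "(\<integral>x. (\<Prod>b\<in>Basis. f b (x \<bullet> b)) \<partial>lborel) = (\<Prod>b\<in>Basis. integral\<^sup>L lborel (f b))" .
qed

lemma integrable_lborel_pair_mult:
  fixes f g :: "real^'n::finite \<Rightarrow> real"
  assumes f: "integrable lborel f" and g: "integrable lborel g"
  shows "integrable (lborel \<Otimes>\<^sub>M lborel) (\<lambda>(a, b). f a * g b)"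
proof -
  have [measurable]: "f \<in> borel_measurable borel" "g \<in> borel_measurable borel"
    using f g by (auto dest: borel_measurable_integrable)
  have "(\<integral>\<^sup>+ z. ennreal (norm ((\<lambda>(a, b). f a * g b) z)) \<partial>(lborel \<Otimes>\<^sub>M lborel)) =
      (\<integral>\<^sup>+ a. \<integral>\<^sup>+ b. ennreal (norm (f a)) * ennreal (norm (g b)) \<partial>lborel \<partial>lborel)"
    by (subst lborel.nn_integral_fst[symmetric])
       (auto simp: abs_mult ennreal_mult case_prod_beta)
  also have "\<dots> = (\<integral>\<^sup>+ a. ennreal (norm (f a)) \<partial>lborel) * (\<integral>\<^sup>+ b. ennreal (norm (g b)) \<partial>lborel)"
    by (simp add: nn_integral_cmult nn_integral_multc)
  also have "\<dots> < \<infinity>"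
    using f g unfolding integrable_iff_bounded by (auto simp: ennreal_mult_less_top)
  finally show ?thesis
    unfolding integrable_iff_bounded by (auto simp: case_prod_beta)
qed

lemma measurable_cis [measurable (raw)]:
  "g \<in> borel_measurable M \<Longrightarrow> (\<lambda>x. cis (g x)) \<in> borel_measurable M"
  by (rule measurable_compose[OF _ borel_measurable_continuous_onI[OF continuous_on_cis[OF continuous_on_id]]])

lemma integrable_mult_cis:
  fixes f :: "real^'n::finite \<Rightarrow> complex"
  assumes [measurable]: "f \<in> borel_measurable borel" "\<theta> \<in> borel_measurable borel"
    and "integrable lborel f"
  shows "integrable lborel (\<lambda>x. f x * cis (\<theta> x))"
  by (rule Bochner_Integration.integrable_bound[OF assms(3)]) (auto simp: norm_mult)

text \<open>Fubini for the kernel \<open>exp (i s y \<cdot> \<xi>)\<close>; for \<open>s = -1\<close> this is the multiplication formula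
\<open>\<integral> (F f) g = \<integral> f (F g)\<close>.\<close>

lemma integral_exchange_cis:
  fixes f g :: "real^'n::finite \<Rightarrow> complex"
  assumes [measurable]: "f \<in> borel_measurable borel" "g \<in> borel_measurable borel"
    and f: "integrable lborel f" and g: "integrable lborel g"
  shows "(\<integral>\<xi>. (\<integral>y. f y * cis (s * (y \<bullet> \<xi>)) \<partial>lborel) * g \<xi> \<partial>lborel) =
         (\<integral>y. f y * (\<integral>\<xi>. g \<xi> * cis (s * (y \<bullet> \<xi>)) \<partial>lborel) \<partial>lborel)"
proof -
  define K where "K \<xi> y = f y * cis (s * (y \<bullet> \<xi>)) * g \<xi>" for \<xi> y :: "real^'n"
  have [measurable]: "(\<lambda>(\<xi>, y). K \<xi> y) \<in> borel_measurable (lborel \<Otimes>\<^sub>M lborel)"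
    unfolding K_def by measurable
  have K: "integrable (lborel \<Otimes>\<^sub>M lborel) (\<lambda>(\<xi>, y). K \<xi> y)"
    by (rule Bochner_Integration.integrable_bound
          [OF integrable_lborel_pair_mult[OF integrable_norm[OF g] integrable_norm[OF f]]])
       (auto simp: K_def norm_mult)
  have "(\<integral>\<xi>. (\<integral>y. f y * cis (s * (y \<bullet> \<xi>)) \<partial>lborel) * g \<xi> \<partial>lborel) =
      (\<integral>\<xi>. (\<integral>y. K \<xi> y \<partial>lborel) \<partial>lborel)"
    unfolding K_def by (intro Bochner_Integration.integral_cong refl integral_mult_left_zero[symmetric])
  also have "\<dots> = (\<integral>y. (\<integral>\<xi>. K \<xi> y \<partial>lborel) \<partial>lborel)"
    using lborel_pair.Fubini_integral[OF K] by simp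
  also have "\<dots> = (\<integral>y. f y * (\<integral>\<xi>. g \<xi> * cis (s * (y \<bullet> \<xi>)) \<partial>lborel) \<partial>lborel)"
  proof (intro Bochner_Integration.integral_cong refl)
    fix y
    have "K \<xi> y = f y * (g \<xi> * cis (s * (y \<bullet> \<xi>)))" for \<xi>
      by (simp add: K_def mult_ac)
    then show "(\<integral>\<xi>. K \<xi> y \<partial>lborel) = f y * (\<integral>\<xi>. g \<xi> * cis (s * (y \<bullet> \<xi>)) \<partial>lborel)"
      by (simp only: integral_mult_right_zero)
  qed
  finally show ?thesis .
qed


definition cauchy_weight :: "real^'n::finite \<Rightarrow> real" where
  "cauchy_weight x = (\<Prod>b\<in>Basis. inverse (1 + (x \<bullet> b)\<^sup>2))"

lemma cauchy_weight_measurable [measurable]: "cauchy_weight \<in> borel_measurable borel"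
  unfolding cauchy_weight_def by measurable

lemma integrable_cauchy_weight: "integrable lborel (cauchy_weight :: real^'n::finite \<Rightarrow> real)"
proof -
  have "integrable lborel (\<lambda>x::real. inverse (1 + x\<^sup>2))"
    using integrable_inverse_1_plus_square by (simp add: einterval_eq_UNIV set_integrable_def)
  then show ?thesis
    unfolding cauchy_weight_def[abs_def]
    using lborel_integrable_prod_coords[of "\<lambda>_ x. inverse (1 + x\<^sup>2)"] by simp
qed

lemma cauchy_weight_eq_inverse: "cauchy_weight x = inverse (\<Prod>b\<in>Basis. 1 + (x \<bullet> b)\<^sup>2)"
  unfolding cauchy_weight_def using prod_inversef[of "\<lambda>b. 1 + (x \<bullet> b)\<^sup>2" Basis] by (simp add: o_def)

lemma cauchy_weight_eq_components:
  "cauchy_weight (\<xi>::real^'n::finite) = inverse (\<Prod>j\<in>UNIV. 1 + (\<xi> $ j)\<^sup>2)"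
proof -
  have inj: "inj_on (\<lambda>j::'n. axis j (1::real)) UNIV" by (auto simp: inj_on_def axis_eq_axis)
  have Basis: "(Basis :: (real^'n) set) = (\<lambda>j. axis j 1) ` UNIV" by (auto simp: Basis_vec_def)
  show ?thesis
    unfolding cauchy_weight_eq_inverse Basis by (subst prod.reindex[OF inj]) (simp add: o_def inner_axis)
qed

lemma cauchy_weight_ge: "inverse ((1 + norm x) ^ (2 * CARD('n))) \<le> cauchy_weight (x :: real^'n::finite)"
proof -
  have "(\<Prod>b\<in>(Basis::(real^'n) set). 1 + (x \<bullet> b)\<^sup>2) \<le> (\<Prod>b\<in>(Basis::(real^'n) set). (1 + norm x)\<^sup>2)"
  proof (intro prod_mono conjI)
    fix b :: "real^'n" assume "b \<in> Basis"
    then have "(x \<bullet> b)\<^sup>2 \<le> (norm x)\<^sup>2"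
      using Basis_le_norm by (metis abs_ge_zero power2_abs power_mono)
    moreover have "(1 + norm x)\<^sup>2 = 1 + (norm x)\<^sup>2 + 2 * norm x"
      by (simp add: power2_eq_square algebra_simps)
    ultimately show "1 + (x \<bullet> b)\<^sup>2 \<le> (1 + norm x)\<^sup>2"
      using norm_ge_zero[of x] by linarith
  qed auto
  also have "\<dots> = (1 + norm x) ^ (2 * CARD('n))"
    by (simp add: power_mult[symmetric] mult.commute)
  finally show ?thesis
    unfolding cauchy_weight_eq_inverse by (intro le_imp_inverse_le prod_pos) (auto intro: add_pos_nonneg)
qed

lemma norm_le_cauchy_weight:
  fixes f :: "real^'n::finite \<Rightarrow> 'a::real_normed_vector"
  assumes "\<And>x. (1 + norm x) ^ (2 * CARD('n)) * norm (f x) \<le> B"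
  shows "norm (f x) \<le> B * cauchy_weight x"
proof -
  have p: "0 < (1 + norm x) ^ (2 * CARD('n))" by (simp add: add_pos_nonneg)
  then have "0 \<le> B" using assms[of x] by (meson norm_ge_zero order_trans zero_le_mult_iff less_imp_le)
  have "norm (f x) \<le> B * inverse ((1 + norm x) ^ (2 * CARD('n)))"
    using assms[of x] p by (simp add: field_simps)
  also have "\<dots> \<le> B * cauchy_weight x"
    using \<open>0 \<le> B\<close> cauchy_weight_ge[of x] by (intro mult_left_mono) auto
  finally show ?thesis .
qed

lemma integrable_bounded_by_cauchy_weight:
  fixes f :: "real^'n::finite \<Rightarrow> complex"
  assumes "f \<in> borel_measurable borel" and "\<And>x. norm (f x) \<le> B * cauchy_weight x"
  shows "integrable lborel f"
proof (rule Bochner_Integration.integrable_bound[where f = "\<lambda>x. B * cauchy_weight x"])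
  show "AE x in lborel. norm (f x) \<le> norm (B * cauchy_weight x)"
    using assms(2) by (auto intro!: always_eventually) (metis abs_ge_self order_trans real_norm_def)
qed (use assms(1) integrable_cauchy_weight in auto)

section \<open>Schwartz functions\<close>

lemma dlist_append: "dlist (xs @ ys) f = dlist xs (dlist ys f)"
  by (induction xs) auto

lemma schwartz_dlist: "schwartz f \<Longrightarrow> schwartz (dlist is f)"
  unfolding schwartz_def by (metis dlist_append)

lemma schwartz_partial: "schwartz f \<Longrightarrow> schwartz (partial j f)"
  using schwartz_dlist[of f "[j]"] by simp

lemma schwartz_decay: "schwartz f \<Longrightarrow> \<exists>B. \<forall>x. (1 + norm x) ^ N * cmod (dlist is f x) \<le> B"
  unfolding schwartz_def by blast

lemma schwartz_bounded: "schwartz f \<Longrightarrow> \<exists>B. \<forall>x. cmod (f x) \<le> B"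
  using schwartz_decay[of f 0 "[]"] by auto

lemma schwartz_le_cauchy_weight: "schwartz f \<Longrightarrow> \<exists>B. \<forall>x. cmod (dlist is f x) \<le> B * cauchy_weight x"
  using schwartz_decay[of f "2 * CARD('n)" "is"] norm_le_cauchy_weight by metis

lemma schwartz_has_vector_derivative_line:
  assumes "schwartz f"
  shows "((\<lambda>t. f (x + t *\<^sub>R axis j 1)) has_vector_derivative partial j f (x + t0 *\<^sub>R axis j 1)) (at t0)"
proof -
  let ?y = "x + t0 *\<^sub>R axis j 1"
  have "(\<lambda>s. dlist [] f (?y + s *\<^sub>R axis j 1)) differentiable (at 0)"
    using assms unfolding schwartz_def by blast
  then have "((\<lambda>s. f (?y + s *\<^sub>R axis j 1)) has_vector_derivative partial j f ?y) (at 0)"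
    unfolding partial_def by (simp add: vector_derivative_works[symmetric])
  then have "((\<lambda>s. f (?y + s *\<^sub>R axis j 1)) \<circ> (\<lambda>t. t - t0) has_vector_derivative 1 *\<^sub>R partial j f ?y) (at t0)"
    by (intro vector_diff_chain_at) (auto intro!: derivative_eq_intros)
  moreover have "(\<lambda>s. f (?y + s *\<^sub>R axis j 1)) \<circ> (\<lambda>t. t - t0) = (\<lambda>t. f (x + t *\<^sub>R axis j 1))"
    by (auto simp: fun_eq_iff algebra_simps)
  ultimately show ?thesis by simp
qed

lemma norm_diff_le_of_vector_derivative_bound:
  fixes g :: "real \<Rightarrow> 'a::real_normed_vector"
  assumes "a \<le> b" and "\<And>t. t \<in> {a..b} \<Longrightarrow> (g has_vector_derivative g' t) (at t)"
    and "\<And>t. t \<in> {a..b} \<Longrightarrow> norm (g' t) \<le> B"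
  shows "norm (g b - g a) \<le> B * (b - a)"
proof -
  have "norm (g b - g a) \<le> B * norm (b - a)"
  proof (rule differentiable_bound[where f' = "\<lambda>t h. h *\<^sub>R g' t"])
    show "(g has_derivative (\<lambda>h. h *\<^sub>R g' t)) (at t within {a..b})" if "t \<in> {a..b}" for t
      using assms(2)[OF that] by (simp add: has_vector_derivative_def has_derivative_at_withinI)
    show "onorm (\<lambda>h. h *\<^sub>R g' t) \<le> B" if "t \<in> {a..b}" for t
      using assms(3)[OF that] onorm_scaleR_left[OF bounded_linear_ident, of "g' t"] onorm_id[where 'a=real]
      by (simp add: id_def)
  qed (use assms(1) in auto)
  then show ?thesis using assms(1) by simp
qed

lemma norm_diff_le_coordinatewise:
  fixes f :: "real^'n::finite \<Rightarrow> 'a::real_normed_vector"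
  assumes "\<And>z s j. norm (f (z + s *\<^sub>R axis j 1) - f z) \<le> B * \<bar>s\<bar>"
  shows "norm (f y - f x) \<le> B * (\<Sum>j\<in>UNIV. \<bar>y $ j - x $ j\<bar>)"
proof -
  have "norm (f (\<chi> j. if j \<in> S then y $ j else x $ j) - f x) \<le> B * (\<Sum>j\<in>S. \<bar>y $ j - x $ j\<bar>)"
    for S :: "'n set"
  proof (induction S rule: infinite_finite_induct)
    case (infinite A) then show ?case by simp
  next
    case empty
    have "(\<chi> j. if j \<in> {} then y $ j else x $ j) = x" by (simp add: vec_eq_iff)
    then show ?case by simp
  next
    case (insert j S)
    let ?z = "\<chi> k. if k \<in> S then y $ k else x $ k"
    have eq: "(\<chi> k. if k \<in> insert j S then y $ k else x $ k) = ?z + (y $ j - x $ j) *\<^sub>R axis j 1"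
      using insert(2) by (auto simp: vec_eq_iff axis_def)
    have "norm (f (?z + (y $ j - x $ j) *\<^sub>R axis j 1) - f x) \<le>
          norm (f (?z + (y $ j - x $ j) *\<^sub>R axis j 1) - f ?z) + norm (f ?z - f x)"
      using norm_triangle_ineq[of "f (?z + (y $ j - x $ j) *\<^sub>R axis j 1) - f ?z" "f ?z - f x"] by simp
    also have "\<dots> \<le> B * \<bar>y $ j - x $ j\<bar> + B * (\<Sum>j\<in>S. \<bar>y $ j - x $ j\<bar>)"
      using assms insert.IH by (intro add_mono) auto
    finally show ?case using eq insert(1,2) by (simp add: distrib_left)
  qed
  from this[of UNIV] show ?thesis by (simp add: vec_eq_iff)
qed

lemma schwartz_partial_bounded: "schwartz f \<Longrightarrow> \<exists>B. \<forall>j x. cmod (partial j f x) \<le> B"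
proof -
  assume "schwartz f"
  then have "\<forall>j. \<exists>B. \<forall>x. cmod (partial j f x) \<le> B"
    using schwartz_decay[of f 0 "[_]"] by simp
  then obtain B where B: "\<And>j x. cmod (partial j f x) \<le> B j" by metis
  have "cmod (partial j f x) \<le> (\<Sum>j\<in>UNIV. \<bar>B j\<bar>)" for j x
    using B[of j x] member_le_sum[of j UNIV "\<lambda>j. \<bar>B j\<bar>"] by fastforce
  then show ?thesis by blast
qed

lemma schwartz_lipschitz:
  assumes f: "schwartz (f :: real^'n::finite \<Rightarrow> complex)"
  shows "\<exists>L. L-lipschitz_on UNIV f"
proof -
  obtain B where B: "\<And>j x. cmod (partial j f x) \<le> B" using schwartz_partial_bounded[OF f] by blast
  have "cmod (f (z + s *\<^sub>R axis j 1) - f z) \<le> B * \<bar>s\<bar>" for z s j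
  proof (cases "0 \<le> s")
    case True
    then show ?thesis
      using norm_diff_le_of_vector_derivative_bound[of 0 s "\<lambda>t. f (z + t *\<^sub>R axis j 1)"
          "\<lambda>t. partial j f (z + t *\<^sub>R axis j 1)"]
        schwartz_has_vector_derivative_line[OF f] B by simp
  next
    case False
    then have "cmod (f z - f (z + s *\<^sub>R axis j 1)) \<le> B * (0 - s)"
      using norm_diff_le_of_vector_derivative_bound[of s 0 "\<lambda>t. f (z + t *\<^sub>R axis j 1)"
          "\<lambda>t. partial j f (z + t *\<^sub>R axis j 1)"]
        schwartz_has_vector_derivative_line[OF f] B by simp
    then show ?thesis using False by (simp add: norm_minus_commute)
  qed
  then have coord: "cmod (f y - f x) \<le> B * (\<Sum>j\<in>UNIV. \<bar>y $ j - x $ j\<bar>)" for x y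
    by (rule norm_diff_le_coordinatewise)
  have "0 \<le> B" using B[of undefined 0] by (meson norm_ge_zero order_trans)
  have "cmod (f y - f x) \<le> (B * CARD('n)) * dist y x" for x y :: "real^'n"
  proof -
    have "(\<Sum>j\<in>UNIV. \<bar>y $ j - x $ j\<bar>) \<le> (\<Sum>j\<in>(UNIV::'n set). dist y x)"
      by (intro sum_mono) (metis component_le_norm_cart dist_norm vector_minus_component)
    then show ?thesis
      using coord[of y x] \<open>0 \<le> B\<close> by (simp add: mult_left_mono mult.assoc order_trans)
  qed
  then show ?thesis
    using \<open>0 \<le> B\<close> by (intro exI[of _ "B * CARD('n)"] lipschitz_onI) (auto simp: dist_norm)
qed

lemma schwartz_continuous: "schwartz f \<Longrightarrow> continuous_on UNIV f"
  using schwartz_lipschitz lipschitz_on_continuous_on by blast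

lemma schwartz_measurable: "schwartz f \<Longrightarrow> f \<in> borel_measurable borel"
  by (intro borel_measurable_continuous_onI schwartz_continuous)

lemma schwartz_integrable: "schwartz f \<Longrightarrow> integrable lborel f"
  using schwartz_le_cauchy_weight[of f "[]"] schwartz_measurable
  by (auto intro: integrable_bounded_by_cauchy_weight)

lemma partial_diff:
  assumes "(\<lambda>t. F (x + t *\<^sub>R axis j 1)) differentiable (at 0)"
    and "(\<lambda>t. G (x + t *\<^sub>R axis j 1)) differentiable (at 0)"
  shows "partial j (\<lambda>x. F x - G x) x = partial j F x - partial j G x"
  unfolding partial_def
  by (rule vector_derivative_at, rule has_vector_derivative_diff)
     (use assms in \<open>auto simp: vector_derivative_works\<close>)

lemma dlist_diff:
  assumes "schwartz f" and "schwartz g"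
  shows "dlist is (\<lambda>x. f x - g x) = (\<lambda>x. dlist is f x - dlist is g x)"
proof (induction "is")
  case (Cons i "is")
  show ?case
    by (simp only: dlist.simps Cons.IH)
       (use assms in \<open>auto simp: fun_eq_iff schwartz_def intro!: partial_diff\<close>)
qed simp

lemma schwartz_diff:
  assumes f: "schwartz f" and g: "schwartz g"
  shows "schwartz (\<lambda>x. f x - g x)"
  unfolding schwartz_def dlist_diff[OF f g]
proof (intro conjI allI)
  show "(\<lambda>t. dlist is f (x + t *\<^sub>R axis i 1) - dlist is g (x + t *\<^sub>R axis i 1)) differentiable (at 0)"
    for "is" i x
    using f g unfolding schwartz_def by (intro differentiable_diff) blast+
next
  fix "is" and N :: nat
  obtain B1 where B1: "\<And>x. (1 + norm x) ^ N * cmod (dlist is f x) \<le> B1"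
    using schwartz_decay[OF f] by blast
  obtain B2 where B2: "\<And>x. (1 + norm x) ^ N * cmod (dlist is g x) \<le> B2"
    using schwartz_decay[OF g] by blast
  have "(1 + norm x) ^ N * cmod (dlist is f x - dlist is g x) \<le>
        (1 + norm x) ^ N * (cmod (dlist is f x) + cmod (dlist is g x))" for x
    by (intro mult_left_mono norm_triangle_ineq4) (simp add: add_nonneg_nonneg)
  also have "\<dots> x \<le> B1 + B2" for x using B1[of x] B2[of x] by (simp add: distrib_left)
  finally show "\<exists>B. \<forall>x. (1 + norm x) ^ N * cmod (dlist is f x - dlist is g x) \<le> B" by blast
qed

section \<open>The Fourier transform\<close>

lemma fourier_lborel:
  fixes f :: "real^'n::finite \<Rightarrow> complex"
  assumes "f \<in> borel_measurable borel"
  shows "fourier f \<xi> = (\<integral>x. f x * cis (- (x \<bullet> \<xi>)) \<partial>lborel)"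
  unfolding fourier_def by (rule integral_completion) (use assms in simp)

lemma inv_fourier_lborel:
  fixes \<phi> :: "real^'n::finite \<Rightarrow> complex"
  assumes "\<phi> \<in> borel_measurable borel"
  shows "inv_fourier \<phi> \<xi> =
    complex_of_real ((2 * pi) powr (- real CARD('n))) * (\<integral>y. \<phi> y * cis (y \<bullet> \<xi>) \<partial>lborel)"
  unfolding inv_fourier_def by (subst integral_completion) (use assms in \<open>auto simp: inner_commute\<close>)

lemma inv_fourier_eq_fourier:
  fixes \<phi> :: "real^'n::finite \<Rightarrow> complex"
  shows "inv_fourier \<phi> \<xi> = complex_of_real ((2 * pi) powr (- real CARD('n))) * fourier \<phi> (- \<xi>)"
  unfolding inv_fourier_def fourier_def by (simp add: inner_commute)

lemma fourier_measurable:
  fixes f :: "real^'n::finite \<Rightarrow> complex"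
  assumes [measurable]: "f \<in> borel_measurable borel"
  shows "fourier f \<in> borel_measurable borel"
proof -
  have "(\<lambda>(\<xi>, x). f x * cis (- (x \<bullet> (\<xi>::real^'n)))) \<in> borel_measurable (borel \<Otimes>\<^sub>M lborel)"
    by measurable
  then have "(\<lambda>\<xi>. \<integral>x. f x * cis (- (x \<bullet> \<xi>)) \<partial>lborel) \<in> borel_measurable borel"
    by (rule lborel.borel_measurable_lebesgue_integral)
  moreover have "fourier f = (\<lambda>\<xi>. \<integral>x. f x * cis (- (x \<bullet> \<xi>)) \<partial>lborel)"
    using fourier_lborel[OF assms] by blast
  ultimately show ?thesis by simp
qed

lemma norm_fourier_le:
  fixes f :: "real^'n::finite \<Rightarrow> complex"
  assumes "f \<in> borel_measurable borel"
  shows "cmod (fourier f \<xi>) \<le> (\<integral>x. cmod (f x) \<partial>lborel)"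
  using integral_norm_bound[of lborel "\<lambda>x. f x * cis (- (x \<bullet> \<xi>))"]
  by (simp add: fourier_lborel[OF assms] norm_mult)

lemma fourier_translate:
  fixes f :: "real^'n::finite \<Rightarrow> complex"
  assumes [measurable]: "f \<in> borel_measurable borel"
  shows "fourier (\<lambda>x. f (x + t)) \<xi> = cis (t \<bullet> \<xi>) * fourier f \<xi>"
proof -
  let ?G = "\<lambda>y. f y * cis (- ((y - t) \<bullet> \<xi>))"
  have "cis (t \<bullet> \<xi>) * fourier f \<xi> = integral\<^sup>L lborel ?G"
    unfolding fourier_lborel[OF assms] integral_mult_right_zero[symmetric]
    by (intro Bochner_Integration.integral_cong refl) (auto simp: inner_diff_left cis_mult algebra_simps)
  also have "\<dots> = (\<integral>x. ?G (t + 1 *\<^sub>R x) \<partial>lborel)"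
    using lborel_integral_vec_affine[of 1 ?G t] by simp
  finally show ?thesis by (simp add: fourier_lborel add.commute)
qed

lemma fourier_diff:
  fixes f g :: "real^'n::finite \<Rightarrow> complex"
  assumes [measurable]: "f \<in> borel_measurable borel" "g \<in> borel_measurable borel"
    and "integrable lborel f" "integrable lborel g"
  shows "fourier (\<lambda>x. f x - g x) \<xi> = fourier f \<xi> - fourier g \<xi>"
proof -
  have "integrable lborel (\<lambda>x. f x * cis (- (x \<bullet> \<xi>)))" "integrable lborel (\<lambda>x. g x * cis (- (x \<bullet> \<xi>)))"
    by (auto intro: integrable_mult_cis assms)
  then show ?thesis by (simp add: fourier_lborel left_diff_distrib)
qed

lemma fourier_difference_quotient:
  fixes \<phi> :: "real^'n::finite \<Rightarrow> complex"
  assumes [measurable]: "\<phi> \<in> borel_measurable borel" and "integrable lborel \<phi>"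
  shows "fourier (\<lambda>x. (1 / s) *\<^sub>R (\<phi> (x + s *\<^sub>R axis j 1) - \<phi> x)) \<xi> =
         (1 / s) *\<^sub>R ((cis (s * \<xi> $ j) - 1) * fourier \<phi> \<xi>)"
proof -
  have m: "(\<lambda>x. \<phi> (x + s *\<^sub>R axis j 1) - \<phi> x) \<in> borel_measurable borel" by measurable
  have "fourier (\<lambda>x. (1 / s) *\<^sub>R (\<phi> (x + s *\<^sub>R axis j 1) - \<phi> x)) \<xi> =
      (\<integral>x. (1 / s) *\<^sub>R ((\<phi> (x + s *\<^sub>R axis j 1) - \<phi> x) * cis (- (x \<bullet> \<xi>))) \<partial>lborel)"
    by (subst fourier_lborel) (auto simp: mult_scaleR_left)
  also have "\<dots> = (1 / s) *\<^sub>R fourier (\<lambda>x. \<phi> (x + s *\<^sub>R axis j 1) - \<phi> x) \<xi>"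
    by (simp only: integral_scaleR_right fourier_lborel[OF m])
  also have "fourier (\<lambda>x. \<phi> (x + s *\<^sub>R axis j 1) - \<phi> x) \<xi> =
      fourier (\<lambda>x. \<phi> (x + s *\<^sub>R axis j 1)) \<xi> - fourier \<phi> \<xi>"
    using assms by (intro fourier_diff integrable_translate) auto
  finally show ?thesis by (simp add: fourier_translate inner_axis' algebra_simps)
qed

lemma has_vector_derivative_quotient_sequence:
  fixes g :: "real \<Rightarrow> 'a::real_normed_vector"
  assumes "(g has_vector_derivative g') (at 0)" and "s \<longlonglongrightarrow> 0" and "\<And>k. s k \<noteq> 0"
  shows "(\<lambda>k. (1 / s k) *\<^sub>R (g (s k) - g 0)) \<longlonglongrightarrow> g'"
proof -
  have "(\<lambda>h. norm (g h - g 0 - h *\<^sub>R g') / norm h) \<midarrow>0\<rightarrow> 0"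
    using assms(1) unfolding has_vector_derivative_def has_derivative_at by simp
  moreover have "filterlim s (at 0) sequentially"
    using assms(2,3) by (auto simp: filterlim_at)
  ultimately have "(\<lambda>k. norm (g (s k) - g 0 - s k *\<^sub>R g') / norm (s k)) \<longlonglongrightarrow> 0"
    using filterlim_compose by (auto simp: o_def)
  moreover have "norm ((1 / s k) *\<^sub>R (g (s k) - g 0) - g') = norm (g (s k) - g 0 - s k *\<^sub>R g') / norm (s k)" for k
  proof -
    have "(1 / s k) *\<^sub>R (g (s k) - g 0) - g' = (1 / s k) *\<^sub>R (g (s k) - g 0 - s k *\<^sub>R g')"
      using assms(3)[of k] by (simp add: algebra_simps)
    then show ?thesis by (simp add: divide_inverse abs_inverse mult.commute)
  qed
  ultimately show ?thesis using tendsto_norm_zero_iff LIM_zero_cancel by fastforce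
qed

lemma cis_has_vector_derivative: "((\<lambda>t. cis (t * a)) has_vector_derivative (\<i> * of_real a)) (at 0)"
proof -
  have "((\<lambda>z. exp (\<i> * of_real a * z)) has_field_derivative (\<i> * of_real a) * exp (\<i> * of_real a * of_real 0)) (at (of_real 0))"
    by (auto intro!: derivative_eq_intros)
  then have "((\<lambda>t. exp (\<i> * of_real a * of_real t)) has_vector_derivative (\<i> * of_real a)) (at 0)"
    using has_vector_derivative_real_field[where s=UNIV] by fastforce
  then show ?thesis by (simp add: cis_conv_exp mult_ac)
qed

lemma decay_bound_shift:
  fixes g :: "'a::real_normed_vector \<Rightarrow> 'b::real_normed_vector"
  assumes B: "\<And>z. (1 + norm z) ^ N * norm (g z) \<le> B" and "norm v \<le> 1"
  shows "(1 + norm x) ^ N * norm (g (x + v)) \<le> 2 ^ N * B"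
proof -
  have "norm x \<le> norm (x + v) + norm v"
    by (metis add_diff_cancel_right' norm_triangle_ineq4)
  then have "1 + norm x \<le> 2 * (1 + norm (x + v))"
    using assms(2) norm_ge_zero[of "x + v"] by argo
  then have "(1 + norm x) ^ N * norm (g (x + v)) \<le> (2 * (1 + norm (x + v))) ^ N * norm (g (x + v))"
    by (intro mult_right_mono power_mono) auto
  also have "\<dots> = 2 ^ N * ((1 + norm (x + v)) ^ N * norm (g (x + v)))"
    by (simp only: power_mult_distrib mult.assoc)
  also have "\<dots> \<le> 2 ^ N * B" using B[of "x + v"] by simp
  finally show ?thesis .
qed

lemma schwartz_difference_quotient_le:
  fixes \<phi> :: "real^'n::finite \<Rightarrow> complex"
  assumes f: "schwartz \<phi>"
  obtains B where "\<And>s x. 0 < s \<Longrightarrow> s \<le> 1 \<Longrightarrow>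
    cmod ((1 / s) *\<^sub>R (\<phi> (x + s *\<^sub>R axis j 1) - \<phi> x)) \<le> B * cauchy_weight x"
proof -
  define N where "N = 2 * CARD('n)"
  obtain B where B: "\<And>z. (1 + norm z) ^ N * cmod (partial j \<phi> z) \<le> B"
    using schwartz_decay[OF f, of N "[j]"] by auto
  have "(1 + norm x) ^ N * cmod ((1 / s) *\<^sub>R (\<phi> (x + s *\<^sub>R axis j 1) - \<phi> x)) \<le> 2 ^ N * B"
    if s: "0 < s" "s \<le> 1" for s x
  proof -
    let ?g = "\<lambda>t. \<phi> (x + t *\<^sub>R axis j 1)"
    have pos: "0 < (1 + norm x) ^ N" by (simp add: add_pos_nonneg)
    have "norm (partial j \<phi> (x + t *\<^sub>R axis j 1)) \<le> 2 ^ N * B / (1 + norm x) ^ N"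
      if "t \<in> {0..s}" for t
      using decay_bound_shift[of N "partial j \<phi>" B "t *\<^sub>R axis j 1" x] B that s pos
      by (simp add: field_simps)
    then have "norm (?g s - ?g 0) \<le> (2 ^ N * B / (1 + norm x) ^ N) * (s - 0)"
      using s schwartz_has_vector_derivative_line[OF f]
      by (intro norm_diff_le_of_vector_derivative_bound) auto
    then have "norm (?g s - ?g 0) / s \<le> 2 ^ N * B / (1 + norm x) ^ N"
      using s by (simp add: divide_le_eq mult.commute)
    moreover have "cmod ((1 / s) *\<^sub>R (\<phi> (x + s *\<^sub>R axis j 1) - \<phi> x)) = norm (?g s - ?g 0) / s"
      using s by simp
    ultimately show ?thesis using pos by (simp add: field_simps)
  qed
  then show ?thesis
    using that norm_le_cauchy_weight[where f = "\<lambda>x. (1 / _) *\<^sub>R (\<phi> (x + _ *\<^sub>R axis j 1) - \<phi> x)"]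
    unfolding N_def by blast
qed

lemma fourier_partial:
  fixes \<phi> :: "real^'n::finite \<Rightarrow> complex"
  assumes f: "schwartz \<phi>"
  shows "fourier (partial j \<phi>) \<xi> = (\<i> * of_real (\<xi> $ j)) * fourier \<phi> \<xi>"
proof -
  define s :: "nat \<Rightarrow> real" where "s k = inverse (real (Suc k))" for k
  define D where "D k x = (1 / s k) *\<^sub>R (\<phi> (x + s k *\<^sub>R axis j 1) - \<phi> x)" for k x
  have s: "0 < s k" "s k \<le> 1" for k unfolding s_def by (auto simp: field_simps)
  have "s \<longlonglongrightarrow> 0" unfolding s_def by (rule LIMSEQ_inverse_real_of_nat)
  have [measurable]: "\<phi> \<in> borel_measurable borel" "partial j \<phi> \<in> borel_measurable borel"
    using schwartz_measurable f schwartz_partial by blast+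
  have [measurable]: "D k \<in> borel_measurable borel" for k unfolding D_def by measurable
  obtain B where B: "\<And>k x. cmod (D k x) \<le> B * cauchy_weight x"
    using schwartz_difference_quotient_le[OF f, of j] s unfolding D_def by metis
  have "(\<lambda>k. fourier (D k) \<xi>) \<longlonglongrightarrow> fourier (partial j \<phi>) \<xi>"
    unfolding fourier_lborel[OF \<open>partial j \<phi> \<in> borel_measurable borel\<close>] fourier_lborel[OF \<open>D _ \<in> _\<close>]
  proof (rule integral_dominated_convergence[where w = "\<lambda>x. B * cauchy_weight x"])
    show "AE x in lborel. (\<lambda>k. D k x * cis (- (x \<bullet> \<xi>))) \<longlonglongrightarrow> partial j \<phi> x * cis (- (x \<bullet> \<xi>))"
    proof (intro always_eventually allI tendsto_mult_right)
      fix x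
      show "(\<lambda>k. D k x) \<longlonglongrightarrow> partial j \<phi> x"
        using has_vector_derivative_quotient_sequence[OF schwartz_has_vector_derivative_line[OF f]
            \<open>s \<longlonglongrightarrow> 0\<close>] s
        unfolding D_def by (simp add: less_imp_neq[symmetric])
    qed
  qed (use B in \<open>auto simp: norm_mult integrable_cauchy_weight\<close>)
  moreover have "fourier (D k) \<xi> = (1 / s k) *\<^sub>R ((cis (s k * \<xi> $ j) - 1) * fourier \<phi> \<xi>)" for k
    unfolding D_def by (rule fourier_difference_quotient) (use f schwartz_integrable in auto)
  moreover have "(\<lambda>k. (1 / s k) *\<^sub>R ((cis (s k * \<xi> $ j) - 1) * fourier \<phi> \<xi>)) \<longlonglongrightarrow>
      (\<i> * of_real (\<xi> $ j)) * fourier \<phi> \<xi>"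
  proof -
    have "(\<lambda>k. (1 / s k) *\<^sub>R (cis (s k * \<xi> $ j) - cis (0 * \<xi> $ j))) \<longlonglongrightarrow> \<i> * of_real (\<xi> $ j)"
      using has_vector_derivative_quotient_sequence[OF cis_has_vector_derivative \<open>s \<longlonglongrightarrow> 0\<close>] s
      by (metis less_irrefl)
    then have "(\<lambda>k. ((1 / s k) *\<^sub>R (cis (s k * \<xi> $ j) - 1)) * fourier \<phi> \<xi>) \<longlonglongrightarrow>
        (\<i> * of_real (\<xi> $ j)) * fourier \<phi> \<xi>"
      by (intro tendsto_mult_right) simp
    then show ?thesis by (simp add: scaleR_left_commute)
  qed
  ultimately show ?thesis using LIMSEQ_unique by auto
qed

lemma
  assumes f: "schwartz \<psi>"
  shows schwartz_minus_second_partial: "schwartz (\<lambda>x. \<psi> x - partial j (partial j \<psi>) x)"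
    and fourier_minus_second_partial: "fourier (\<lambda>x. \<psi> x - partial j (partial j \<psi>) x) \<xi> = (1 + (\<xi> $ j)\<^sup>2) * fourier \<psi> \<xi>"
proof -
  have s2: "schwartz (partial j (partial j \<psi>))" using schwartz_partial[OF schwartz_partial[OF f]] .
  show "schwartz (\<lambda>x. \<psi> x - partial j (partial j \<psi>) x)" by (rule schwartz_diff[OF f s2])
  have "fourier (\<lambda>x. \<psi> x - partial j (partial j \<psi>) x) \<xi> = fourier \<psi> \<xi> - fourier (partial j (partial j \<psi>)) \<xi>"
    by (rule fourier_diff) (auto intro: schwartz_measurable schwartz_integrable f s2)
  then show "fourier (\<lambda>x. \<psi> x - partial j (partial j \<psi>) x) \<xi> = (1 + (\<xi> $ j)\<^sup>2) * fourier \<psi> \<xi>"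
    using fourier_partial[OF schwartz_partial[OF f]] fourier_partial[OF f]
    by (simp add: algebra_simps power2_eq_square)
qed

text \<open>Apply \<open>1 - \<partial>\<^sub>j\<^sup>2\<close> once in every coordinate direction; the Fourier transform of the result
is \<open>\<Prod>\<^sub>j (1 + \<xi>\<^sub>j\<^sup>2)\<close> times that of \<open>\<phi>\<close> and is bounded by its \<open>L\<^sup>1\<close> norm.\<close>

lemma fourier_schwartz_le_cauchy_weight:
  assumes f: "schwartz (\<phi> :: real^'n::finite \<Rightarrow> complex)"
  shows "\<exists>C. \<forall>\<xi>. cmod (fourier \<phi> \<xi>) \<le> C * cauchy_weight \<xi>"
proof -
  have "\<exists>\<psi>. schwartz \<psi> \<and> (\<forall>\<xi>. fourier \<psi> \<xi> = (\<Prod>j\<in>S. 1 + (\<xi> $ j)\<^sup>2) * fourier \<phi> \<xi>)"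
    for S :: "'n set"
  proof (induction S rule: infinite_finite_induct)
    case (insert j S)
    then obtain \<psi> where "schwartz \<psi>" "\<And>\<xi>. fourier \<psi> \<xi> = (\<Prod>j\<in>S. 1 + (\<xi> $ j)\<^sup>2) * fourier \<phi> \<xi>"
      by blast
    then show ?case
      using schwartz_minus_second_partial[of \<psi> j] fourier_minus_second_partial[of \<psi> j] insert(1,2)
      by (intro exI[of _ "\<lambda>x. \<psi> x - partial j (partial j \<psi>) x"]) (simp add: mult_ac)
  qed (use f in auto)
  then obtain \<psi> where \<psi>: "schwartz \<psi>"
    and F\<psi>: "\<And>\<xi>. fourier \<psi> \<xi> = (\<Prod>j\<in>UNIV. 1 + (\<xi> $ j)\<^sup>2) * fourier \<phi> \<xi>"
    by blast
  have "cmod (fourier \<phi> \<xi>) \<le> (\<integral>x. cmod (\<psi> x) \<partial>lborel) * cauchy_weight \<xi>" for \<xi>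
  proof -
    let ?Q = "\<Prod>j\<in>UNIV. 1 + (\<xi> $ j)\<^sup>2"
    have Q: "0 < ?Q" by (intro prod_pos) (auto intro: add_pos_nonneg)
    have "?Q * cmod (fourier \<phi> \<xi>) = cmod (fourier \<psi> \<xi>)"
      using F\<psi>[of \<xi>] Q by (simp add: norm_mult flip: of_real_prod)
    also have "\<dots> \<le> (\<integral>x. cmod (\<psi> x) \<partial>lborel)"
      by (rule norm_fourier_le) (rule schwartz_measurable[OF \<psi>])
    finally show ?thesis using Q by (simp add: cauchy_weight_eq_components field_simps)
  qed
  then show ?thesis by blast
qed

lemma integrable_fourier_schwartz:
  assumes f: "schwartz (\<phi> :: real^'n::finite \<Rightarrow> complex)"
  shows "integrable lborel (fourier \<phi>)"
  using fourier_schwartz_le_cauchy_weight[OF f] fourier_measurable[OF schwartz_measurable[OF f]]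
  by (auto intro: integrable_bounded_by_cauchy_weight)

lemma
  assumes f: "schwartz (\<phi> :: real^'n::finite \<Rightarrow> complex)"
  shows inv_fourier_measurable: "inv_fourier \<phi> \<in> borel_measurable borel"
    and integrable_inv_fourier_schwartz: "integrable lborel (inv_fourier \<phi>)"
proof -
  have [measurable]: "fourier \<phi> \<in> borel_measurable borel"
    using fourier_measurable[OF schwartz_measurable[OF f]] .
  show "inv_fourier \<phi> \<in> borel_measurable borel"
    unfolding inv_fourier_eq_fourier[abs_def] by measurable
  have "integrable lborel (\<lambda>x. fourier \<phi> (0 + (-1) *\<^sub>R x))"
    using lborel_integrable_vec_affine_iff[of "-1" "fourier \<phi>" 0] integrable_fourier_schwartz[OF f] by simp
  then show "integrable lborel (inv_fourier \<phi>)"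
    unfolding inv_fourier_eq_fourier[abs_def] by (intro integrable_mult_right) simp
qed



section \<open>Gaussians\<close>

lemma cis_sum: "finite A \<Longrightarrow> cis (\<Sum>b\<in>A. f b) = (\<Prod>b\<in>A. cis (f b))"
  by (induction A rule: finite_induct) (auto simp: cis_mult[symmetric])

lemma
  shows integrable_std_normal_density_cis:
      "integrable lborel (\<lambda>u. complex_of_real (std_normal_density u) * cis (t * u))"
    and integral_std_normal_density_cis:
      "(\<integral>u. complex_of_real (std_normal_density u) * cis (t * u) \<partial>lborel) = complex_of_real (exp (- (t\<^sup>2) / 2))"
proof -
  show "integrable lborel (\<lambda>u. complex_of_real (std_normal_density u) * cis (t * u))"
    by (rule Bochner_Integration.integrable_bound[where f = std_normal_density]) (auto simp: norm_mult)
  have "char std_normal_distribution t = (\<integral>u. complex_of_real (std_normal_density u) * cis (t * u) \<partial>lborel)"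
    unfolding char_def by (subst integral_density) (auto simp: cis_conv_exp scaleR_conv_of_real)
  then show "(\<integral>u. complex_of_real (std_normal_density u) * cis (t * u) \<partial>lborel) = complex_of_real (exp (- (t\<^sup>2) / 2))"
    by (simp add: char_std_normal_distribution)
qed

lemma
  fixes \<epsilon> s :: real
  assumes e: "\<epsilon> > 0"
  shows integrable_gaussian_1d_cis:
      "integrable lborel (\<lambda>t. complex_of_real (exp (- (\<epsilon> * t)\<^sup>2 / 2)) * cis (s * t))"
    and integral_gaussian_1d_cis:
      "(\<integral>t. complex_of_real (exp (- (\<epsilon> * t)\<^sup>2 / 2)) * cis (s * t) \<partial>lborel)
         = complex_of_real (sqrt (2 * pi) / \<epsilon> * exp (- (s / \<epsilon>)\<^sup>2 / 2))"
proof -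
  let ?g = "\<lambda>t. complex_of_real (exp (- (\<epsilon> * t)\<^sup>2 / 2)) * cis (s * t)"
  have eq: "?g (0 + (1 / \<epsilon>) * u) =
      complex_of_real (sqrt (2 * pi)) * (complex_of_real (std_normal_density u) * cis ((s / \<epsilon>) * u))" for u
    using e by (simp add: std_normal_density_def field_simps)
  have "integrable lborel (\<lambda>u. ?g (0 + (1 / \<epsilon>) * u))"
    unfolding eq by (intro integrable_mult_right integrable_std_normal_density_cis)
  then show "integrable lborel ?g"
    using lborel_integrable_real_affine_iff[of "1/\<epsilon>" ?g 0] e by simp
  have "integral\<^sup>L lborel ?g = \<bar>1/\<epsilon>\<bar> *\<^sub>R (\<integral>u. ?g (0 + (1 / \<epsilon>) * u) \<partial>lborel)"
    using e by (intro lborel_integral_real_affine) simp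
  also have "\<dots> = (1/\<epsilon>) *\<^sub>R (complex_of_real (sqrt (2 * pi)) * complex_of_real (exp (- (s / \<epsilon>)\<^sup>2 / 2)))"
    unfolding eq using e by (subst integral_mult_right_zero, subst integral_std_normal_density_cis) simp
  finally show "integral\<^sup>L lborel ?g = complex_of_real (sqrt (2 * pi) / \<epsilon> * exp (- (s / \<epsilon>)\<^sup>2 / 2))"
    by (simp add: scaleR_conv_of_real)
qed

definition gaussian :: "real \<Rightarrow> real^'n::finite \<Rightarrow> real" where
  "gaussian \<epsilon> \<xi> = (\<Prod>b\<in>Basis. exp (- (\<epsilon> * (\<xi> \<bullet> b))\<^sup>2 / 2))"

lemma gaussian_eq: "gaussian \<epsilon> \<xi> = exp (- (\<epsilon>\<^sup>2 / 2) * (norm \<xi>)\<^sup>2)"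
proof -
  have "(norm \<xi>)\<^sup>2 = (\<Sum>b\<in>Basis. (\<xi> \<bullet> b)\<^sup>2)"
    unfolding power2_norm_eq_inner euclidean_inner[of \<xi> \<xi>] by (simp add: power2_eq_square)
  then have "- (\<epsilon>\<^sup>2 / 2) * (norm \<xi>)\<^sup>2 = (\<Sum>b\<in>Basis. - (\<epsilon> * (\<xi> \<bullet> b))\<^sup>2 / 2)"
    by (simp add: sum_distrib_left sum_divide_distrib power_mult_distrib sum_negf)
  then show ?thesis unfolding gaussian_def by (simp add: exp_sum)
qed

lemma gaussian_pos: "0 < gaussian \<epsilon> \<xi>"
  by (simp add: gaussian_eq)

lemma gaussian_le_1: "gaussian \<epsilon> \<xi> \<le> 1"
  by (simp add: gaussian_eq)

lemma gaussian_measurable [measurable]: "gaussian \<epsilon> \<in> borel_measurable borel"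
  unfolding gaussian_def by measurable

lemma
  fixes \<epsilon> :: real and z :: "real^'n::finite"
  assumes e: "\<epsilon> > 0"
  shows integrable_gaussian_cis: "integrable lborel (\<lambda>\<xi>. complex_of_real (gaussian \<epsilon> \<xi>) * cis (z \<bullet> \<xi>))"
    and integral_gaussian_cis: "(\<integral>\<xi>. complex_of_real (gaussian \<epsilon> \<xi>) * cis (z \<bullet> \<xi>) \<partial>lborel)
         = complex_of_real ((sqrt (2 * pi) / \<epsilon>) ^ CARD('n) * gaussian (1 / \<epsilon>) z)"
proof -
  define f where "f b t = complex_of_real (exp (- (\<epsilon> * t)\<^sup>2 / 2)) * cis ((z \<bullet> b) * t)"
    for b :: "real^'n" and t
  have eq: "complex_of_real (gaussian \<epsilon> \<xi>) * cis (z \<bullet> \<xi>) = (\<Prod>b\<in>Basis. f b (\<xi> \<bullet> b))" for \<xi>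
    unfolding f_def gaussian_def euclidean_inner[of z \<xi>] by (simp add: cis_sum prod.distrib)
  have int: "integrable lborel (f b)" for b
    unfolding f_def using integrable_gaussian_1d_cis[OF e] .
  show "integrable lborel (\<lambda>\<xi>. complex_of_real (gaussian \<epsilon> \<xi>) * cis (z \<bullet> \<xi>))"
    unfolding eq by (rule lborel_integrable_prod_coords) (rule int)
  have "(\<integral>\<xi>. complex_of_real (gaussian \<epsilon> \<xi>) * cis (z \<bullet> \<xi>) \<partial>lborel) = (\<Prod>b\<in>Basis. integral\<^sup>L lborel (f b))"
    unfolding eq by (rule lborel_integral_prod_coords) (rule int)
  also have "\<dots> = (\<Prod>b\<in>(Basis::(real^'n) set).
      complex_of_real (sqrt (2 * pi) / \<epsilon>) * complex_of_real (exp (- ((1 / \<epsilon>) * (z \<bullet> b))\<^sup>2 / 2)))"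
    unfolding f_def integral_gaussian_1d_cis[OF e] by (intro prod.cong refl) (simp add: field_simps)
  also have "\<dots> = complex_of_real (sqrt (2 * pi) / \<epsilon>) ^ CARD('n) *
      (\<Prod>b\<in>(Basis::(real^'n) set). complex_of_real (exp (- ((1 / \<epsilon>) * (z \<bullet> b))\<^sup>2 / 2)))"
    by (simp only: prod.distrib prod_constant) simp
  also have "\<dots> = complex_of_real ((sqrt (2 * pi) / \<epsilon>) ^ CARD('n) * gaussian (1 / \<epsilon>) z)"
    unfolding gaussian_def of_real_mult of_real_prod of_real_power by simp
  finally show "(\<integral>\<xi>. complex_of_real (gaussian \<epsilon> \<xi>) * cis (z \<bullet> \<xi>) \<partial>lborel)
         = complex_of_real ((sqrt (2 * pi) / \<epsilon>) ^ CARD('n) * gaussian (1 / \<epsilon>) z)" .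
qed

definition gauss_kernel :: "real^'n::finite \<Rightarrow> real" where
  "gauss_kernel z = (\<Prod>b\<in>Basis. std_normal_density (z \<bullet> b))"

lemma gauss_kernel_measurable [measurable]: "gauss_kernel \<in> borel_measurable borel"
  unfolding gauss_kernel_def by measurable

lemma gauss_kernel_nonneg: "0 \<le> gauss_kernel z"
  unfolding gauss_kernel_def by (intro prod_nonneg) auto

lemma integrable_gauss_kernel: "integrable lborel gauss_kernel"
  and integral_gauss_kernel: "integral\<^sup>L lborel gauss_kernel = 1"
  unfolding gauss_kernel_def[abs_def]
  using lborel_integrable_prod_coords[of "\<lambda>_. std_normal_density"]
    lborel_integral_prod_coords[of "\<lambda>_. std_normal_density"] by auto

lemma gauss_kernel_eq_gaussian:
  "gauss_kernel z = (1 / sqrt (2 * pi)) ^ CARD('n) * gaussian 1 (z :: real^'n::finite)"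
  unfolding gauss_kernel_def gaussian_def
  by (simp add: std_normal_density_def prod.distrib prod_dividef power_one_over)

inductive complex_polynomial_function :: "(real^'n::finite \<Rightarrow> complex) \<Rightarrow> bool" where
  const: "complex_polynomial_function (\<lambda>x. c)"
| component: "complex_polynomial_function (\<lambda>x::real^'n. complex_of_real (x $ (j::'n)))"
| add: "complex_polynomial_function p \<Longrightarrow> complex_polynomial_function q \<Longrightarrow>
    complex_polynomial_function (\<lambda>x. p x + q x)"
| mult: "complex_polynomial_function p \<Longrightarrow> complex_polynomial_function q \<Longrightarrow>
    complex_polynomial_function (\<lambda>x. p x * q x)"

lemma complex_polynomial_function_line_derivative:
  fixes p :: "real^'n::finite \<Rightarrow> complex" and j :: 'n
  assumes "complex_polynomial_function p"
  shows "\<exists>q. complex_polynomial_function q \<and>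
    (\<forall>x. ((\<lambda>t. p (x + t *\<^sub>R axis j 1)) has_vector_derivative q x) (at 0))"
  using assms
proof (induction p rule: complex_polynomial_function.induct)
  case (const c)
  show ?case by (intro exI[of _ "\<lambda>x. 0"]) (auto intro: complex_polynomial_function.const)
next
  case (component k)
  have "((\<lambda>t. complex_of_real (x $ k + t * axis j 1 $ k)) has_vector_derivative
      complex_of_real (axis j 1 $ k)) (at 0)" for x :: "real^'n"
    by (auto intro!: derivative_eq_intros)
  then show ?case
    by (intro exI[of _ "\<lambda>x. complex_of_real (axis j 1 $ k)"]) (auto intro: complex_polynomial_function.const)
next
  case (add p q)
  then obtain p' q' where "complex_polynomial_function p'" "complex_polynomial_function q'"
    "\<And>x. ((\<lambda>t. p (x + t *\<^sub>R axis j 1)) has_vector_derivative p' x) (at 0)"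
    "\<And>x. ((\<lambda>t. q (x + t *\<^sub>R axis j 1)) has_vector_derivative q' x) (at 0)" by blast
  then show ?case
    by (intro exI[of _ "\<lambda>x. p' x + q' x"])
       (auto intro: complex_polynomial_function.add has_vector_derivative_add)
next
  case (mult p q)
  then obtain p' q' where pq': "complex_polynomial_function p'" "complex_polynomial_function q'"
    and p': "\<And>x. ((\<lambda>t. p (x + t *\<^sub>R axis j 1)) has_vector_derivative p' x) (at 0)"
    and q': "\<And>x. ((\<lambda>t. q (x + t *\<^sub>R axis j 1)) has_vector_derivative q' x) (at 0)" by blast
  moreover have "((\<lambda>t. p (x + t *\<^sub>R axis j 1) * q (x + t *\<^sub>R axis j 1)) has_vector_derivative
      p x * q' x + p' x * q x) (at 0)" for x
    using has_vector_derivative_mult[OF p'[of x] q'[of x]] by simp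
  ultimately show ?case
    by (intro exI[of _ "\<lambda>x. p x * q' x + p' x * q x"] conjI allI complex_polynomial_function.add
        complex_polynomial_function.mult pq' mult.hyps) auto
qed

lemma complex_polynomial_function_bound:
  fixes p :: "real^'n::finite \<Rightarrow> complex"
  assumes "complex_polynomial_function p"
  shows "\<exists>A d. 0 \<le> A \<and> (\<forall>x. cmod (p x) \<le> A * (1 + norm x) ^ d)"
  using assms
proof (induction p rule: complex_polynomial_function.induct)
  case (const c)
  then show ?case by (intro exI[of _ "cmod c"] exI[of _ 0]) auto
next
  case (component j)
  have "cmod (complex_of_real (x $ j)) \<le> 1 * (1 + norm x) ^ 1" for x :: "real^'n"
    using component_le_norm_cart[of x j] by simp
  then show ?case by (intro exI[of _ 1] exI[of _ 1]) auto
next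
  case (add p q)
  then obtain A1 d1 A2 d2 where "0 \<le> A1" "\<And>x. cmod (p x) \<le> A1 * (1 + norm x) ^ d1"
    "0 \<le> A2" "\<And>x. cmod (q x) \<le> A2 * (1 + norm x) ^ d2" by blast
  moreover have "(1 + norm x) ^ d1 \<le> (1 + norm x) ^ (d1 + d2)" "(1 + norm x) ^ d2 \<le> (1 + norm x) ^ (d1 + d2)"
    for x :: "real^'n" by (auto intro!: power_increasing)
  ultimately have "cmod (p x + q x) \<le> (A1 + A2) * (1 + norm x) ^ (d1 + d2)" for x
    by (smt (verit, best) distrib_right mult_left_mono norm_triangle_ineq)
  then show ?case using \<open>0 \<le> A1\<close> \<open>0 \<le> A2\<close> by (intro exI[of _ "A1 + A2"] exI[of _ "d1 + d2"]) auto
next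
  case (mult p q)
  then obtain A1 d1 A2 d2 where b: "0 \<le> A1" "\<And>x. cmod (p x) \<le> A1 * (1 + norm x) ^ d1"
    "0 \<le> A2" "\<And>x. cmod (q x) \<le> A2 * (1 + norm x) ^ d2" by blast
  have "cmod (p x * q x) \<le> (A1 * (1 + norm x) ^ d1) * (A2 * (1 + norm x) ^ d2)" for x
    unfolding norm_mult by (intro mult_mono b(2) b(4)) (use b(1) in auto)
  then have "cmod (p x * q x) \<le> (A1 * A2) * (1 + norm x) ^ (d1 + d2)" for x
    by (simp add: power_add mult_ac)
  then show ?case using b(1,3) by (intro exI[of _ "A1 * A2"] exI[of _ "d1 + d2"]) auto
qed

definition complex_gaussian :: "real \<Rightarrow> real^'n::finite \<Rightarrow> complex" where
  "complex_gaussian \<beta> x = complex_of_real (exp (- \<beta> * (x \<bullet> x)))"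

lemma complex_gaussian_has_vector_derivative_line:
  fixes x :: "real^'n::finite" and j :: 'n
  shows "((\<lambda>t. complex_gaussian \<beta> (x + t *\<^sub>R axis j 1)) has_vector_derivative
      (complex_of_real (-2 * \<beta> * (x $ j)) * complex_gaussian \<beta> x)) (at 0)"
proof -
  have eq: "(x + t *\<^sub>R axis j 1) \<bullet> (x + t *\<^sub>R axis j 1) = x \<bullet> x + 2 * t * (x $ j) + t^2" for t
    by (simp add: inner_add_left inner_add_right inner_axis inner_commute power2_eq_square algebra_simps)
  have "((\<lambda>t. exp (- \<beta> * (x \<bullet> x + 2 * t * (x $ j) + t^2))) has_field_derivative
          exp (- \<beta> * (x \<bullet> x + 2 * 0 * (x $ j) + 0^2)) * (- \<beta> * (2 * (x $ j) + 2 * 0))) (at 0)"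
    by (auto intro!: derivative_eq_intros)
  then have "((\<lambda>t. complex_of_real (exp (- \<beta> * (x \<bullet> x + 2 * t * (x $ j) + t^2)))) has_vector_derivative
          complex_of_real (exp (- \<beta> * (x \<bullet> x)) * (- \<beta> * (2 * (x $ j))))) (at 0)"
    using has_vector_derivative_of_real by fastforce
  then show ?thesis unfolding complex_gaussian_def eq by (simp add: mult_ac)
qed

lemma dlist_complex_gaussian:
  "\<exists>p. complex_polynomial_function p \<and> dlist is (complex_gaussian \<beta>) = (\<lambda>x. p x * complex_gaussian \<beta> x)"
proof (induction "is")
  case Nil
  show ?case by (intro exI[of _ "\<lambda>x. 1"]) (auto intro: complex_polynomial_function.const)
next
  case (Cons i "is")
  then obtain p where p: "complex_polynomial_function p"
    and dp: "dlist is (complex_gaussian \<beta>) = (\<lambda>x. p x * complex_gaussian \<beta> x)" by blast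
  obtain q where q: "complex_polynomial_function q"
    and dq: "\<And>x. ((\<lambda>t. p (x + t *\<^sub>R axis i 1)) has_vector_derivative q x) (at 0)"
    using complex_polynomial_function_line_derivative[OF p, of i] by blast
  define r where "r x = p x * (complex_of_real (-2 * \<beta>) * complex_of_real (x $ i)) + q x" for x
  have "complex_polynomial_function r"
    unfolding r_def by (intro complex_polynomial_function.intros p q)
  moreover have "partial i (\<lambda>x. p x * complex_gaussian \<beta> x) x = r x * complex_gaussian \<beta> x" for x
  proof -
    have "((\<lambda>t. p (x + t *\<^sub>R axis i 1) * complex_gaussian \<beta> (x + t *\<^sub>R axis i 1)) has_vector_derivative
          p x * (complex_of_real (-2 * \<beta> * (x $ i)) * complex_gaussian \<beta> x) + q x * complex_gaussian \<beta> x) (at 0)"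
      using has_vector_derivative_mult[OF dq[of x] complex_gaussian_has_vector_derivative_line[of \<beta> x i]]
      by simp
    then show ?thesis unfolding partial_def r_def
      by (subst vector_derivative_at) (auto simp: algebra_simps)
  qed
  ultimately show ?case by (intro exI[of _ r]) (simp add: dp)
qed

lemma polynomial_mult_exp_neg_square_bounded:
  fixes \<beta> :: real
  assumes b: "\<beta> > 0"
  shows "\<exists>C. \<forall>r\<ge>0. (1 + r) ^ M * exp (- \<beta> * r\<^sup>2) \<le> C"
proof -
  define \<delta> where "\<delta> = \<beta> / (real M + 1)"
  have \<delta>: "0 < \<delta>" "real M * \<delta> \<le> \<beta>"
    using b by (auto simp: \<delta>_def field_simps)
  have lin: "1 + r \<le> (1 + 1 / \<delta>) * exp (\<delta> * r\<^sup>2)" if r: "0 \<le> r" for r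
  proof (cases "1 \<le> \<delta> * r")
    case True
    then have "r \<le> \<delta> * r\<^sup>2" using mult_left_mono[OF True r] by (simp add: power2_eq_square mult_ac)
    then have "1 + r \<le> exp (\<delta> * r\<^sup>2)" using exp_ge_add_one_self[of "\<delta> * r\<^sup>2"] by linarith
    also have "\<dots> \<le> (1 + 1 / \<delta>) * exp (\<delta> * r\<^sup>2)" using \<delta> by simp
    finally show ?thesis .
  next
    case False
    then have "1 + r \<le> 1 + 1 / \<delta>" using \<delta> by (simp add: field_simps)
    also have "\<dots> \<le> (1 + 1 / \<delta>) * exp (\<delta> * r\<^sup>2)"
    proof -
      have "0 < 1 + 1 / \<delta>" "1 \<le> exp (\<delta> * r\<^sup>2)" using \<delta> r by (auto intro: add_pos_pos)
      then show ?thesis using mult_left_mono[of 1 "exp (\<delta> * r\<^sup>2)" "1 + 1 / \<delta>"] by simp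
    qed
    finally show ?thesis .
  qed
  have "(1 + r) ^ M * exp (- \<beta> * r\<^sup>2) \<le> (1 + 1 / \<delta>) ^ M" if r: "0 \<le> r" for r
  proof -
    have "(1 + r) ^ M * exp (- \<beta> * r\<^sup>2) \<le> ((1 + 1 / \<delta>) * exp (\<delta> * r\<^sup>2)) ^ M * exp (- \<beta> * r\<^sup>2)"
      using r by (intro mult_right_mono power_mono lin) auto
    also have "\<dots> = (1 + 1 / \<delta>) ^ M * (exp (\<delta> * r\<^sup>2) ^ M * exp (- \<beta> * r\<^sup>2))"
      by (simp only: power_mult_distrib mult.assoc)
    also have "exp (\<delta> * r\<^sup>2) ^ M * exp (- \<beta> * r\<^sup>2) = exp ((real M * \<delta> - \<beta>) * r\<^sup>2)"
      by (simp only: exp_of_nat_mult[symmetric] exp_add[symmetric] left_diff_distrib mult.assoc)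
         (simp add: algebra_simps)
    also have "(1 + 1 / \<delta>) ^ M * \<dots> \<le> (1 + 1 / \<delta>) ^ M"
      using \<delta> by (intro mult_left_le) (auto simp: mult_nonpos_nonneg)
    finally show ?thesis .
  qed
  then show ?thesis by blast
qed

lemma schwartz_complex_gaussian:
  assumes b: "\<beta> > 0"
  shows "schwartz (complex_gaussian \<beta> :: real^'n::finite \<Rightarrow> complex)"
  unfolding schwartz_def
proof (intro conjI allI)
  fix "is" and i :: 'n and x :: "real^'n"
  obtain p :: "real^'n \<Rightarrow> complex" where p: "complex_polynomial_function p"
    and dp: "dlist is (complex_gaussian \<beta>) = (\<lambda>x. p x * complex_gaussian \<beta> x)"
    using dlist_complex_gaussian by blast
  obtain q where "\<And>x. ((\<lambda>t. p (x + t *\<^sub>R axis i 1)) has_vector_derivative q x) (at 0)"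
    using complex_polynomial_function_line_derivative[OF p, of i] by blast
  from has_vector_derivative_mult[OF this complex_gaussian_has_vector_derivative_line[of \<beta> x i]]
  show "(\<lambda>t. dlist is (complex_gaussian \<beta>) (x + t *\<^sub>R axis i 1)) differentiable (at 0)"
    unfolding dp by (rule differentiableI_vector)
next
  fix "is" and N :: nat
  obtain p :: "real^'n \<Rightarrow> complex" where p: "complex_polynomial_function p"
    and dp: "dlist is (complex_gaussian \<beta>) = (\<lambda>x. p x * complex_gaussian \<beta> x)"
    using dlist_complex_gaussian by blast
  obtain A d where A: "0 \<le> A" "\<And>x. cmod (p x) \<le> A * (1 + norm x) ^ d"
    using complex_polynomial_function_bound[OF p] by blast
  obtain C where C: "\<And>r. r \<ge> 0 \<Longrightarrow> (1 + r) ^ (N + d) * exp (- \<beta> * r\<^sup>2) \<le> C"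
    using polynomial_mult_exp_neg_square_bounded[OF b] by blast
  have "(1 + norm x) ^ N * cmod (dlist is (complex_gaussian \<beta>) x) \<le> A * C" for x :: "real^'n"
  proof -
    have "(1 + norm x) ^ N * cmod (dlist is (complex_gaussian \<beta>) x) =
        (1 + norm x) ^ N * cmod (p x) * exp (- \<beta> * (norm x)\<^sup>2)"
      by (simp add: dp norm_mult complex_gaussian_def power2_norm_eq_inner)
    also have "\<dots> \<le> (1 + norm x) ^ N * (A * (1 + norm x) ^ d) * exp (- \<beta> * (norm x)\<^sup>2)"
      by (intro mult_right_mono mult_left_mono A(2)) auto
    also have "\<dots> = A * ((1 + norm x) ^ (N + d) * exp (- \<beta> * (norm x)\<^sup>2))"
      by (simp add: power_add mult_ac)
    also have "\<dots> \<le> A * C" by (intro mult_left_mono C A(1)) simp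
    finally show ?thesis .
  qed
  then show "\<exists>B. \<forall>x. (1 + norm x) ^ N * cmod (dlist is (complex_gaussian \<beta>) x) \<le> B" by blast
qed

lemma schwartz_gaussian:
  assumes "\<epsilon> > 0"
  shows "schwartz (\<lambda>x::real^'n::finite. complex_of_real (gaussian \<epsilon> x))"
proof -
  have "(\<lambda>x::real^'n. complex_of_real (gaussian \<epsilon> x)) = complex_gaussian (\<epsilon>\<^sup>2 / 2)"
    by (auto simp: fun_eq_iff gaussian_eq complex_gaussian_def power2_norm_eq_inner)
  then show ?thesis using assms by (simp add: schwartz_complex_gaussian)
qed



section \<open>Fourier inversion for Schwartz functions\<close>

lemma two_pi_powr_normalisation:
  assumes "\<epsilon> > 0"
  shows "(2 * pi) powr (- real n) * \<epsilon> ^ n * (sqrt (2 * pi) / \<epsilon>) ^ n = (1 / sqrt (2 * pi)) ^ n"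
proof -
  have "(2 * pi) ^ n = sqrt (2 * pi) ^ n * sqrt (2 * pi) ^ n"
    using power_mult_distrib[of "sqrt (2 * pi)" "sqrt (2 * pi)" n] by simp
  then show ?thesis
    using assms by (simp add: powr_minus powr_realpow power_divide field_simps)
qed

lemma integral_inv_fourier_gaussian:
  fixes \<phi> :: "real^'n::finite \<Rightarrow> complex"
  assumes f: "schwartz \<phi>" and e: "\<epsilon> > 0"
  shows "(\<integral>\<xi>. inv_fourier \<phi> \<xi> * complex_of_real (gaussian \<epsilon> \<xi>) * cis (- (x \<bullet> \<xi>)) \<partial>lborel)
       = (\<integral>u. \<phi> (x + \<epsilon> *\<^sub>R u) * complex_of_real (gauss_kernel u) \<partial>lborel)"
proof -
  have [measurable]: "\<phi> \<in> borel_measurable borel" using schwartz_measurable[OF f] .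
  define c where "c = (2 * pi) powr (- real CARD('n))"
  define K where "K = (sqrt (2 * pi) / \<epsilon>) ^ CARD('n)"
  define g where "g \<xi> = complex_of_real (gaussian \<epsilon> \<xi>) * cis (- (x \<bullet> \<xi>))" for \<xi> :: "real^'n"
  have [measurable]: "g \<in> borel_measurable borel" unfolding g_def by measurable
  have "integrable lborel g"
    using integrable_gaussian_cis[OF e, of "- x"] unfolding g_def by simp
  have inner: "(\<integral>\<xi>. g \<xi> * cis (y \<bullet> \<xi>) \<partial>lborel) = complex_of_real (K * gaussian (1 / \<epsilon>) (y - x))" for y
  proof -
    have "(\<integral>\<xi>. g \<xi> * cis (y \<bullet> \<xi>) \<partial>lborel) =
        (\<integral>\<xi>. complex_of_real (gaussian \<epsilon> \<xi>) * cis ((y - x) \<bullet> \<xi>) \<partial>lborel)"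
      by (intro Bochner_Integration.integral_cong refl)
         (simp add: g_def inner_diff_left cis_mult mult.assoc)
    then show ?thesis by (simp add: integral_gaussian_cis[OF e] K_def)
  qed
  have "(\<integral>\<xi>. inv_fourier \<phi> \<xi> * complex_of_real (gaussian \<epsilon> \<xi>) * cis (- (x \<bullet> \<xi>)) \<partial>lborel) =
      c * (\<integral>\<xi>. (\<integral>y. \<phi> y * cis (y \<bullet> \<xi>) \<partial>lborel) * g \<xi> \<partial>lborel)"
    by (simp add: inv_fourier_lborel c_def g_def mult.assoc integral_mult_right_zero)
  also have "\<dots> = c * (\<integral>y. \<phi> y * complex_of_real (K * gaussian (1 / \<epsilon>) (y - x)) \<partial>lborel)"
    using integral_exchange_cis[OF _ _ schwartz_integrable[OF f] \<open>integrable lborel g\<close>, of 1]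
    by (simp add: inner)
  also have "\<dots> = c * (\<bar>\<epsilon>\<bar> ^ CARD('n)) *\<^sub>R
      (\<integral>u. \<phi> (x + \<epsilon> *\<^sub>R u) * complex_of_real (K * gaussian (1 / \<epsilon>) (\<epsilon> *\<^sub>R u)) \<partial>lborel)"
    using e by (subst lborel_integral_vec_affine[where c = \<epsilon> and t = x]) auto
  also have "\<dots> = complex_of_real (c * \<epsilon> ^ CARD('n) * K) *
      (\<integral>u. \<phi> (x + \<epsilon> *\<^sub>R u) * complex_of_real (gaussian 1 u) \<partial>lborel)"
  proof -
    have "gaussian (1 / \<epsilon>) (\<epsilon> *\<^sub>R u) = gaussian 1 u" for u :: "real^'n"
      using e by (simp add: gaussian_def)
    then have "(\<integral>u. \<phi> (x + \<epsilon> *\<^sub>R u) * complex_of_real (K * gaussian (1 / \<epsilon>) (\<epsilon> *\<^sub>R u)) \<partial>lborel) =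
        complex_of_real K * (\<integral>u. \<phi> (x + \<epsilon> *\<^sub>R u) * complex_of_real (gaussian 1 u) \<partial>lborel)"
      by (simp add: mult.left_commute flip: integral_mult_right_zero)
    then show ?thesis using e by (simp add: scaleR_conv_of_real)
  qed
  also have "c * \<epsilon> ^ CARD('n) * K = (1 / sqrt (2 * pi)) ^ CARD('n)"
    unfolding c_def K_def using e by (rule two_pi_powr_normalisation)
  finally show ?thesis
    by (simp add: gauss_kernel_eq_gaussian mult.left_commute flip: integral_mult_right_zero)
qed

lemma tendsto_integral_gaussian_damped:
  fixes \<psi> :: "real^'n::finite \<Rightarrow> complex"
  assumes [measurable]: "\<psi> \<in> borel_measurable borel" and "integrable lborel \<psi>" and "e \<longlonglongrightarrow> 0"
  shows "(\<lambda>k. \<integral>\<xi>. \<psi> \<xi> * complex_of_real (gaussian (e k) \<xi>) * cis (- (x \<bullet> \<xi>)) \<partial>lborel) \<longlonglongrightarrow> fourier \<psi> x"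
  unfolding fourier_lborel[OF assms(1)] inner_commute[of _ x]
proof (rule integral_dominated_convergence[where w = "\<lambda>\<xi>. norm (\<psi> \<xi>)"])
  show "AE \<xi> in lborel. (\<lambda>k. \<psi> \<xi> * complex_of_real (gaussian (e k) \<xi>) * cis (- (x \<bullet> \<xi>))) \<longlonglongrightarrow>
      \<psi> \<xi> * cis (- (x \<bullet> \<xi>))"
  proof (intro always_eventually allI)
    fix \<xi> :: "real^'n"
    have "(\<lambda>k. exp (- ((e k)\<^sup>2 / 2) * (norm \<xi>)\<^sup>2)) \<longlonglongrightarrow> exp (- (0\<^sup>2 / 2) * (norm \<xi>)\<^sup>2)"
      by (intro tendsto_intros assms(3)) auto
    then have "(\<lambda>k. gaussian (e k) \<xi>) \<longlonglongrightarrow> 1" by (simp add: gaussian_eq)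
    then show "(\<lambda>k. \<psi> \<xi> * complex_of_real (gaussian (e k) \<xi>) * cis (- (x \<bullet> \<xi>))) \<longlonglongrightarrow> \<psi> \<xi> * cis (- (x \<bullet> \<xi>))"
      by (auto intro!: tendsto_eq_intros)
  qed
qed (use assms(2) in \<open>auto simp: norm_mult gaussian_pos less_imp_le gaussian_le_1 mult_left_le\<close>)

lemma tendsto_integral_gauss_kernel_dilation:
  fixes \<phi> :: "real^'n::finite \<Rightarrow> complex"
  assumes cont: "continuous_on UNIV \<phi>" and B: "\<And>y. cmod (\<phi> y) \<le> B" and e: "e \<longlonglongrightarrow> 0"
  shows "(\<lambda>k. \<integral>u. \<phi> (x + e k *\<^sub>R u) * complex_of_real (gauss_kernel u) \<partial>lborel) \<longlonglongrightarrow> \<phi> x"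
proof -
  have [measurable]: "\<phi> \<in> borel_measurable borel" by (rule borel_measurable_continuous_onI[OF cont])
  have lim: "AE u in lborel. (\<lambda>k. \<phi> (x + e k *\<^sub>R u) * complex_of_real (gauss_kernel u)) \<longlonglongrightarrow>
      \<phi> x * complex_of_real (gauss_kernel u)"
  proof (intro always_eventually allI tendsto_mult_right)
    fix u :: "real^'n"
    have "(\<lambda>k. x + e k *\<^sub>R u) \<longlonglongrightarrow> x + 0 *\<^sub>R u" by (intro tendsto_intros e)
    then show "(\<lambda>k. \<phi> (x + e k *\<^sub>R u)) \<longlonglongrightarrow> \<phi> x"
      using continuous_on_tendsto_compose[OF cont, of "\<lambda>k. x + e k *\<^sub>R u" x] by simp
  qed
  have bound: "AE u in lborel. norm (\<phi> (x + e k *\<^sub>R u) * complex_of_real (gauss_kernel u)) \<le> B * gauss_kernel u"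
    for k using B by (auto simp: norm_mult gauss_kernel_nonneg mult_right_mono)
  have "(\<lambda>k. \<integral>u. \<phi> (x + e k *\<^sub>R u) * complex_of_real (gauss_kernel u) \<partial>lborel) \<longlonglongrightarrow>
      (\<integral>u. \<phi> x * complex_of_real (gauss_kernel (u::real^'n)) \<partial>lborel)"
    by (rule integral_dominated_convergence[OF _ _ integrable_mult_right[OF integrable_gauss_kernel] lim bound])
       measurable
  also have "(\<integral>u. \<phi> x * complex_of_real (gauss_kernel (u::real^'n)) \<partial>lborel) = \<phi> x"
    by (simp add: integral_gauss_kernel)
  finally show ?thesis .
qed

theorem fourier_inv_fourier:
  fixes \<phi> :: "real^'n::finite \<Rightarrow> complex"
  assumes f: "schwartz \<phi>"
  shows "fourier (inv_fourier \<phi>) x = \<phi> x"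
proof -
  define e :: "nat \<Rightarrow> real" where "e k = inverse (real (Suc k))" for k
  have "e \<longlonglongrightarrow> 0" unfolding e_def by (rule LIMSEQ_inverse_real_of_nat)
  obtain M where "\<And>y. cmod (\<phi> y) \<le> M" using schwartz_bounded[OF f] by blast
  have "(\<lambda>k. \<integral>u. \<phi> (x + e k *\<^sub>R u) * complex_of_real (gauss_kernel u) \<partial>lborel) \<longlonglongrightarrow>
      fourier (inv_fourier \<phi>) x"
    using tendsto_integral_gaussian_damped[OF inv_fourier_measurable[OF f]
        integrable_inv_fourier_schwartz[OF f] \<open>e \<longlonglongrightarrow> 0\<close>]
    by (simp add: integral_inv_fourier_gaussian[OF f] e_def)
  moreover have "(\<lambda>k. \<integral>u. \<phi> (x + e k *\<^sub>R u) * complex_of_real (gauss_kernel u) \<partial>lborel) \<longlonglongrightarrow> \<phi> x"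
    by (rule tendsto_integral_gauss_kernel_dilation)
       (use schwartz_continuous[OF f] \<open>\<And>y. cmod (\<phi> y) \<le> M\<close> \<open>e \<longlonglongrightarrow> 0\<close> in auto)
  ultimately show ?thesis by (rule LIMSEQ_unique)
qed



section \<open>Translation as a Fourier multiplier\<close>

definition translation_symbol :: "real^'n::finite \<Rightarrow> (real^'n \<Rightarrow> complex) \<Rightarrow> complex" where
  "translation_symbol h \<psi> = (LINT \<xi>|lebesgue. \<psi> \<xi> * cis (- (h \<bullet> \<xi>)))"

lemma translation_symbol_lborel:
  fixes f :: "real^'n::finite \<Rightarrow> complex"
  assumes [measurable]: "f \<in> borel_measurable borel"
  shows "translation_symbol h f = (\<integral>\<xi>. f \<xi> * cis (- (h \<bullet> \<xi>)) \<partial>lborel)"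
  unfolding translation_symbol_def by (rule integral_completion) measurable

lemma schwartz_seminorm_ge:
  fixes f :: "real^'n::finite \<Rightarrow> complex"
  assumes f: "schwartz f"
  shows "(1 + norm x) ^ N * cmod (f x) \<le> schwartz_seminorm N f"
proof -
  let ?S = "{(1 + norm y) ^ N * cmod (dlist is f y) | y is. length is \<le> N}"
  obtain B where B: "\<And>is x. (1 + norm x) ^ N * cmod (dlist is f x) \<le> B is"
    using schwartz_decay[OF f] by metis
  define L where "L = {is. set is \<subseteq> (UNIV :: 'n set) \<and> length is \<le> N}"
  have "finite L" unfolding L_def by (rule finite_lists_length_le) simp
  have "y \<le> (\<Sum>is\<in>L. \<bar>B is\<bar>)" if "y \<in> ?S" for y
  proof -
    from that obtain x "is" where y: "y = (1 + norm x) ^ N * cmod (dlist is f x)" "length is \<le> N"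
      by blast
    then have "\<bar>B is\<bar> \<le> (\<Sum>is\<in>L. \<bar>B is\<bar>)"
      using \<open>finite L\<close> by (intro member_le_sum) (auto simp: L_def)
    moreover have "(1 + norm x) ^ N * cmod (dlist is f x) \<le> B is" by (rule B)
    ultimately show ?thesis using y(1) by linarith
  qed
  then have "bdd_above ?S" by (rule bdd_aboveI)
  moreover have "(1 + norm x) ^ N * cmod (dlist [] f x) \<in> ?S"
    by (rule CollectI, rule exI[of _ x], rule exI[of _ "[]"]) simp
  ultimately have "(1 + norm x) ^ N * cmod (dlist [] f x) \<le> Sup ?S" by (rule cSup_upper[rotated])
  then show ?thesis unfolding schwartz_seminorm_def by simp
qed

lemma tempered_translation_symbol: "tempered (translation_symbol (h :: real^'n::finite))"
  unfolding tempered_def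
proof (intro conjI allI impI)
  fix f g :: "real^'n \<Rightarrow> complex" assume f: "schwartz f" and g: "schwartz g"
  have [measurable]: "f \<in> borel_measurable borel" "g \<in> borel_measurable borel"
    using schwartz_measurable f g by auto
  have "integrable lborel (\<lambda>\<xi>. f \<xi> * cis (- (h \<bullet> \<xi>)))" "integrable lborel (\<lambda>\<xi>. g \<xi> * cis (- (h \<bullet> \<xi>)))"
    by (rule integrable_mult_cis, measurable, rule schwartz_integrable, fact)+
  then show "translation_symbol h (\<lambda>x. f x + g x) = translation_symbol h f + translation_symbol h g"
    by (simp add: translation_symbol_lborel distrib_right)
next
  fix f :: "real^'n \<Rightarrow> complex" and c assume "schwartz f"
  then have [measurable]: "f \<in> borel_measurable borel" by (rule schwartz_measurable)
  show "translation_symbol h (\<lambda>x. c * f x) = c * translation_symbol h f"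
    by (simp add: translation_symbol_lborel mult.assoc)
next
  define N where "N = 2 * CARD('n)"
  have "cmod (translation_symbol h f) \<le> integral\<^sup>L lborel (cauchy_weight :: real^'n \<Rightarrow> real) * schwartz_seminorm N f"
    if f: "schwartz f" for f :: "real^'n \<Rightarrow> complex"
  proof -
    have [measurable]: "f \<in> borel_measurable borel" using schwartz_measurable f by auto
    have "cmod (f x) \<le> schwartz_seminorm N f * cauchy_weight x" for x
      by (rule norm_le_cauchy_weight) (use schwartz_seminorm_ge[OF f] in \<open>auto simp: N_def\<close>)
    then have "(\<integral>\<xi>. cmod (f \<xi>) \<partial>lborel) \<le> (\<integral>\<xi>. schwartz_seminorm N f * cauchy_weight (\<xi>::real^'n) \<partial>lborel)"
      by (intro Bochner_Integration.integral_mono integrable_norm schwartz_integrable[OF f]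
          integrable_mult_right integrable_cauchy_weight)
    moreover have "cmod (translation_symbol h f) \<le> (\<integral>\<xi>. cmod (f \<xi>) \<partial>lborel)"
      using integral_norm_bound[of lborel "\<lambda>\<xi>. f \<xi> * cis (- (h \<bullet> \<xi>))"]
      by (simp add: translation_symbol_lborel norm_mult)
    ultimately show ?thesis by (simp add: mult.commute)
  qed
  then show "\<exists>C N. \<forall>f. schwartz f \<longrightarrow> cmod (translation_symbol h f) \<le> C * schwartz_seminorm N f"
    by blast
qed

lemma integral_fourier_inv_fourier_cis:
  fixes u \<phi> :: "real^'n::finite \<Rightarrow> complex"
  assumes u: "schwartz u" and f: "schwartz \<phi>"
  shows "(\<integral>\<xi>. fourier u \<xi> * inv_fourier \<phi> \<xi> * cis (- (h \<bullet> \<xi>)) \<partial>lborel) = (\<integral>x. u (x - h) * \<phi> x \<partial>lborel)"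
proof -
  have [measurable]: "u \<in> borel_measurable borel" "inv_fourier \<phi> \<in> borel_measurable borel"
    using schwartz_measurable[OF u] inv_fourier_measurable[OF f] .
  define v where "v x = u (x - h)" for x
  have [measurable]: "v \<in> borel_measurable borel" unfolding v_def by measurable
  have "integrable lborel v"
    using integrable_translate[of u "- h"] schwartz_integrable[OF u] unfolding v_def by simp
  have "fourier u \<xi> * inv_fourier \<phi> \<xi> * cis (- (h \<bullet> \<xi>)) =
      (\<integral>y. v y * cis (- 1 * (y \<bullet> \<xi>)) \<partial>lborel) * inv_fourier \<phi> \<xi>" for \<xi>
  proof -
    have "fourier u \<xi> * cis (- (h \<bullet> \<xi>)) = (\<integral>y. v y * cis (- 1 * (y \<bullet> \<xi>)) \<partial>lborel)"
      using fourier_translate[of u "- h" \<xi>] by (simp add: v_def fourier_lborel mult.commute)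
    then show ?thesis by (metis mult.assoc mult.commute)
  qed
  then have "(\<integral>\<xi>. fourier u \<xi> * inv_fourier \<phi> \<xi> * cis (- (h \<bullet> \<xi>)) \<partial>lborel) =
      (\<integral>\<xi>. (\<integral>y. v y * cis (- 1 * (y \<bullet> \<xi>)) \<partial>lborel) * inv_fourier \<phi> \<xi> \<partial>lborel)"
    by (simp only:)
  also have "\<dots> = (\<integral>y. v y * (\<integral>\<xi>. inv_fourier \<phi> \<xi> * cis (- 1 * (y \<bullet> \<xi>)) \<partial>lborel) \<partial>lborel)"
    by (rule integral_exchange_cis[OF _ _ \<open>integrable lborel v\<close> integrable_inv_fourier_schwartz[OF f]])
       measurable
  also have "\<dots> = (\<integral>y. v y * fourier (inv_fourier \<phi>) y \<partial>lborel)"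
  proof -
    have "(\<integral>\<xi>. inv_fourier \<phi> \<xi> * cis (- 1 * (y \<bullet> \<xi>)) \<partial>lborel) = fourier (inv_fourier \<phi>) y" for y
      unfolding fourier_lborel[OF \<open>inv_fourier \<phi> \<in> borel_measurable borel\<close>] by (simp add: inner_commute)
    then show ?thesis by (simp only:)
  qed
  finally show ?thesis by (simp add: fourier_inv_fourier[OF f] v_def)
qed

lemma represents_multiplier_op_translation_symbol:
  fixes u :: "real^'n::finite \<Rightarrow> complex" and h :: "real^'n"
  assumes u: "schwartz u"
  shows "represents (multiplier_op (translation_symbol h) u) (\<lambda>x. u (x - h))"
  unfolding represents_def
proof (intro conjI allI impI)
  have [measurable]: "u \<in> borel_measurable borel" using schwartz_measurable[OF u] .
  show "(\<lambda>x. u (x - h)) \<in> borel_measurable lebesgue"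
    by (rule measurable_completion) measurable
  fix \<phi> :: "real^'n \<Rightarrow> complex" assume f: "schwartz \<phi>"
  have [measurable]: "\<phi> \<in> borel_measurable borel" "inv_fourier \<phi> \<in> borel_measurable borel"
    using schwartz_measurable[OF f] inv_fourier_measurable[OF f] .
  have [measurable]: "fourier u \<in> borel_measurable borel" by (rule fourier_measurable) measurable
  obtain B where B: "\<And>y. cmod (u y) \<le> B" using schwartz_bounded[OF u] by blast
  have "integrable lborel (\<lambda>x. u (x - h) * \<phi> x)"
  proof (rule Bochner_Integration.integrable_bound[where f = "\<lambda>x. B * norm (\<phi> x)"])
    show "AE x in lborel. norm (u (x - h) * \<phi> x) \<le> norm (B * norm (\<phi> x))"
      by (intro always_eventually allI)
         (metis B abs_ge_self mult_right_mono norm_ge_zero norm_mult order_trans real_norm_def)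
  qed (auto intro: integrable_mult_right integrable_norm schwartz_integrable f)
  then show "integrable lebesgue (\<lambda>x. u (x - h) * \<phi> x)"
    by (subst integrable_completion) measurable
  have "multiplier_op (translation_symbol h) u \<phi> =
      (\<integral>\<xi>. fourier u \<xi> * inv_fourier \<phi> \<xi> * cis (- (h \<bullet> \<xi>)) \<partial>lborel)"
    unfolding multiplier_op_def by (rule translation_symbol_lborel) measurable
  also have "\<dots> = (LINT x|lebesgue. u (x - h) * \<phi> x)"
    by (subst integral_completion) (auto simp: integral_fourier_inv_fourier_cis[OF u f])
  finally show "multiplier_op (translation_symbol h) u \<phi> = (LINT x|lebesgue. u (x - h) * \<phi> x)" .
qed

lemma translation_symbol_gaussian:
  fixes h :: "real^'n::finite"
  assumes e: "\<epsilon> > 0"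
  shows "translation_symbol h (\<lambda>x. complex_of_real (gaussian \<epsilon> x)) =
      complex_of_real ((sqrt (2 * pi) / \<epsilon>) ^ CARD('n) * gaussian (1 / \<epsilon>) (- h))"
  using integral_gaussian_cis[OF e, of "- h"] by (simp add: translation_symbol_lborel)

lemma lebesgue_integral_gaussian:
  assumes e: "\<epsilon> > 0"
  shows "(LINT x|lebesgue. complex_of_real (gaussian \<epsilon> (x::real^'n::finite))) =
      complex_of_real ((sqrt (2 * pi) / \<epsilon>) ^ CARD('n))"
  using integral_gaussian_cis[OF e, of "0 :: real^'n"]
  by (subst integral_completion) (auto simp: gaussian_eq)

text \<open>Were the symbol a constant \<open>k\<close>, pairing with the Gaussian of width \<open>\<epsilon>\<close> would give
\<open>k = exp (- \<bar>h\<bar>\<^sup>2 / (2 \<epsilon>\<^sup>2))\<close> for every \<open>\<epsilon> > 0\<close>.\<close>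

lemma translation_symbol_not_constant:
  fixes h :: "real^'n::finite"
  assumes h: "h \<noteq> 0"
  shows "\<not> constant_distribution (translation_symbol h)"
proof
  assume "constant_distribution (translation_symbol h)"
  then obtain k where k: "\<And>\<phi>. schwartz \<phi> \<Longrightarrow> translation_symbol h \<phi> = k * (LINT x|lebesgue. \<phi> x)"
    unfolding constant_distribution_def by blast
  have kv: "k = complex_of_real (gaussian (1 / \<epsilon>) (- h))" if e: "\<epsilon> > 0" for \<epsilon>
  proof -
    define K where "K = (sqrt (2 * pi) / \<epsilon>) ^ CARD('n)"
    have "K > 0" unfolding K_def using e by simp
    have "complex_of_real K * complex_of_real (gaussian (1 / \<epsilon>) (- h)) = complex_of_real K * k"
      using k[OF schwartz_gaussian[OF e]] translation_symbol_gaussian[OF e, of h]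
        lebesgue_integral_gaussian[OF e, where 'n='n]
      unfolding K_def by (simp add: mult.commute)
    then show ?thesis using \<open>K > 0\<close> by simp
  qed
  have "gaussian 1 (- h) = gaussian (1 / 2) (- h)"
    using kv[of 1] kv[of 2] by simp
  then have "(norm h)\<^sup>2 / 2 = (norm h)\<^sup>2 / 8" by (simp add: gaussian_eq power_divide)
  then show False using h by simp
qed

section \<open>The weighted space\<close>

lemma powr_add_le_add_powr:
  fixes a b \<alpha> :: real
  assumes "0 \<le> a" and "0 \<le> b" and "0 < \<alpha>" and "\<alpha> \<le> 1"
  shows "(a + b) powr \<alpha> \<le> a powr \<alpha> + b powr \<alpha>"
proof (cases "a = 0 \<or> b = 0")
  case False
  then have a: "0 < a" and b: "0 < b" using assms by auto
  have "(a + b) powr \<alpha> = a * (a + b) powr (\<alpha> - 1) + b * (a + b) powr (\<alpha> - 1)"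
    using powr_add[of "a + b" 1 "\<alpha> - 1"] a b by (simp add: distrib_right)
  also have "\<dots> \<le> a * a powr (\<alpha> - 1) + b * b powr (\<alpha> - 1)"
    using assms a b by (intro add_mono mult_left_mono powr_mono2') auto
  also have "\<dots> = a powr \<alpha> + b powr \<alpha>"
    using a b by (simp add: powr_add[symmetric] powr_mult_base)
  finally show ?thesis .
qed (use assms in auto)

lemma exp_norm_powr_le_mult:
  fixes c \<alpha> :: real and x h :: "'a::real_normed_vector"
  assumes "c > 0" and "0 < \<alpha>" and "\<alpha> \<le> 1"
  shows "exp (c * norm x powr \<alpha>) \<le> exp (c * norm h powr \<alpha>) * exp (c * norm (x - h) powr \<alpha>)"
proof -
  have "norm x \<le> norm (x - h) + norm h" by (metis diff_add_cancel norm_triangle_ineq)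
  then have "norm x powr \<alpha> \<le> (norm (x - h) + norm h) powr \<alpha>" using assms by (intro powr_mono2) auto
  also have "\<dots> \<le> norm (x - h) powr \<alpha> + norm h powr \<alpha>" using assms by (intro powr_add_le_add_powr) auto
  finally have "c * norm x powr \<alpha> \<le> c * (norm (x - h) powr \<alpha> + norm h powr \<alpha>)"
    using assms(1) by (intro mult_left_mono) auto
  then have "c * norm x powr \<alpha> \<le> c * norm h powr \<alpha> + c * norm (x - h) powr \<alpha>"
    by (simp add: algebra_simps)
  then show ?thesis by (simp flip: exp_add)
qed

lemma banach_function_norm_mono:
  assumes "banach_function_norm \<rho>" "f \<in> borel_measurable lebesgue" "g \<in> borel_measurable lebesgue"
    "\<And>x. g x \<le> f x"
  shows "\<rho> g \<le> \<rho> f"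
  using assms unfolding banach_function_norm_def by blast

lemma banach_function_norm_scale:
  assumes "banach_function_norm \<rho>" "f \<in> borel_measurable lebesgue" "0 \<le> a"
  shows "\<rho> (\<lambda>x. ennreal a * f x) = ennreal a * \<rho> f"
  using assms unfolding banach_function_norm_def by blast

lemma
  fixes \<rho> :: "(real^'n::finite \<Rightarrow> ennreal) \<Rightarrow> ennreal" and u :: "real^'n \<Rightarrow> complex"
  assumes bfn: "banach_function_norm \<rho>" and ti: "translation_invariant \<rho>"
    and [measurable]: "w \<in> borel_measurable borel" "u \<in> borel_measurable borel"
    and w: "\<And>x. 0 \<le> w x" and "0 \<le> K" and shift: "\<And>x. w x \<le> K * w (x - h)"
    and u: "in_Yw \<rho> w u"
  shows Ywnorm_translate_le: "Ywnorm \<rho> w (\<lambda>x. u (x - h)) \<le> ennreal K * Ywnorm \<rho> w u"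
    and in_Yw_translate: "in_Yw \<rho> w (\<lambda>x. u (x - h))"
proof -
  define U where "U x = u x * complex_of_real (w x)" for x
  have "Ynorm \<rho> (\<lambda>x. U (x - h)) = Ynorm \<rho> U"
    using ti u unfolding translation_invariant_def in_Yw_def U_def by blast
  then have shift_U: "\<rho> (\<lambda>x. ennreal (cmod (U (x - h)))) = Ywnorm \<rho> w u"
    unfolding Ynorm_def Ywnorm_def U_def by simp
  have "ennreal (cmod (u (x - h) * complex_of_real (w x))) \<le> ennreal K * ennreal (cmod (U (x - h)))" for x
  proof -
    have "cmod (u (x - h) * complex_of_real (w x)) = cmod (u (x - h)) * w x"
      using w[of x] by (simp add: norm_mult)
    also have "\<dots> \<le> cmod (u (x - h)) * (K * w (x - h))" by (intro mult_left_mono shift) auto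
    also have "\<dots> = K * cmod (U (x - h))" using w[of "x - h"] by (simp add: U_def norm_mult)
    finally show ?thesis using \<open>0 \<le> K\<close> by (simp add: ennreal_mult[symmetric] ennreal_leI)
  qed
  then have "Ywnorm \<rho> w (\<lambda>x. u (x - h)) \<le> \<rho> (\<lambda>x. ennreal K * ennreal (cmod (U (x - h))))"
    unfolding Ywnorm_def Ynorm_def U_def
    by (intro banach_function_norm_mono[OF bfn]) (auto intro!: measurable_completion)
  also have "\<dots> = ennreal K * Ywnorm \<rho> w u"
    unfolding U_def using \<open>0 \<le> K\<close>
    by (subst banach_function_norm_scale[OF bfn]) (auto simp: shift_U[unfolded U_def] intro!: measurable_completion)
  finally show le: "Ywnorm \<rho> w (\<lambda>x. u (x - h)) \<le> ennreal K * Ywnorm \<rho> w u" .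
  have "Ywnorm \<rho> w u < \<infinity>" using u unfolding in_Yw_def in_Y_def Ywnorm_def by simp
  then have "Ywnorm \<rho> w (\<lambda>x. u (x - h)) < \<infinity>"
    using le by (simp add: ennreal_mult_less_top le_less_trans)
  moreover have "(\<lambda>x. u (x - h) * complex_of_real (w x)) \<in> borel_measurable lebesgue"
    by (rule measurable_completion) measurable
  ultimately show "in_Yw \<rho> w (\<lambda>x. u (x - h))"
    unfolding in_Yw_def in_Y_def Ywnorm_def by simp
qed

theorem corollary8p5:
  fixes \<rho> :: "(real^'n::finite \<Rightarrow> ennreal) \<Rightarrow> ennreal" and c \<alpha> :: real
  assumes "c > 0" and "0 < \<alpha>" and "\<alpha> \<le> 1"
    and "banach_function_norm \<rho>" and "translation_invariant \<rho>"
  shows "\<exists>a. fourier_multiplier_Yw \<rho> (\<lambda>x. exp (c * norm x powr \<alpha>)) a \<and> \<not> constant_distribution a"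
proof -
  define h :: "real^'n" where "h = axis undefined 1"
  have "h \<noteq> 0" unfolding h_def by (simp add: axis_eq_0_iff)
  define w :: "real^'n \<Rightarrow> real" where "w x = exp (c * norm x powr \<alpha>)" for x
  have w_measurable: "w \<in> borel_measurable borel" unfolding w_def by measurable
  have w_nonneg: "0 \<le> w x" for x unfolding w_def by simp
  have w_shift: "w x \<le> w h * w (x - h)" for x
    unfolding w_def using assms(1-3) by (rule exp_norm_powr_le_mult)
  have "fourier_multiplier_Yw \<rho> w (translation_symbol h)"
    unfolding fourier_multiplier_Yw_def
  proof (intro conjI tempered_translation_symbol exI[of _ "w h"] allI impI)
    fix u :: "real^'n \<Rightarrow> complex"
    assume "schwartz u \<and> in_Yw \<rho> w u \<and> (\<exists>x. u x \<noteq> 0)"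
    then have u: "schwartz u" "in_Yw \<rho> w u" by auto
    note translate = Ywnorm_translate_le in_Yw_translate
    note translate = translate[OF assms(4,5) w_measurable schwartz_measurable[OF u(1)] w_nonneg
        w_nonneg[of h] w_shift u(2)]
    show "\<exists>g. in_Yw \<rho> w g \<and> represents (multiplier_op (translation_symbol h) u) g \<and>
        Ywnorm \<rho> w g \<le> ennreal (w h) * Ywnorm \<rho> w u"
      using translate represents_multiplier_op_translation_symbol[OF u(1)] by blast
  qed
  then show ?thesis
    using translation_symbol_not_constant[OF \<open>h \<noteq> 0\<close>] unfolding w_def by blast
qed

end
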